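(* Let $\mathcal B_i$ be a set of bidders whose valuations are all gross substitute. Then for every price vector $r\ge0$, the demand $D_i(r)$ of an EF-mediator for $\mathcal B_i$ equals the demand $D_{\mathrm{OR}}(r)$ of the OR-player for $\mathcal B_i$. Moreover, for a set $S$ in this demand, the allocation computed in the virtual auction of the EF-mediator for $S$ and reserve prices $r$ is an optimal allocation for the OR-player for $S$, and vice versa (an optimal allocation of $S$ for the OR-player can be used by the EF-mediator as her virtual-auction allocation for $S$ and $r$, maximizing her revenue).
   Context: Let $\Omega$ be a finite set of items; price vectors are $p\in\mathbb{R}_{\ge0}^\Omega$, $p(S)=\sum_{j\in S}p_j$, comparisons item-wise. Each bidder $b$ has a monotone valuation $v_b:2^\Omega\to\mathbb{R}$, $v_b(\emptyset)=0$; $D_b(p)$ is the set of $S\subseteq\Omega$ maximizing $v_b(S)-p(S)$. A valuation is gross substitute if for all price vectors $p^{(2)}\ge p^{(1)}\ge 0$ and every $D^{(1)}\in D(p^{(1)})$ there is $D^{(2)}\in D(p^{(2)})$ containing every $j\in D^{(1)}$ with $p^{(1)}_j=p^{(2)}_j$. An allocation of $T\subseteq\Omega$ to bidders $\mathcal B_i$ is a family of pairwise disjoint subsets $\langle T_b\rangle_{b\in\mathcal B_i}$ of $T$; it is envy free on $T$ at $p$ if each $T_b$ maximizes $v_b(\cdot)-p(\cdot)$ over subsets of $T$. EF-mediator for $\mathcal B_i$ at prices $r\ge0$: for every $S\subseteq\Omega$ a virtual auction computes a minimal (no item-wise smaller vector has the property) price vector $p^S\ge r$ that is envy free on $S$ for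 $\mathcal B_i$, with an envy-free allocation $\langle S_b\rangle$ of $S$ at $p^S$ maximizing $\sum_b p^S(S_b)$ among such allocations; set $p^S_j=r_j$ for $j\notin S$. Revenue $R_{i,r}(S)=\sum_b p^S(S_b)-r(S)$ if $S_b\in D_b(p^S)$ for all $b\in\mathcal B_i$, else $-1$. Demand $D_i(r)$ = set of maximizers of $R_{i,r}$. OR-player for $\mathcal B_i$: valuation $v_{\mathrm{OR}}(S)=\max\sum_{b\in\mathcal B_i}v_b(S_b)$ over allocations $\langle S_b\rangle$ of $S$; an allocation attaining this maximum is an optimal allocation for $S$. Her demand $D_{\mathrm{OR}}(r)$ is the set of $S$ maximizing $v_{\mathrm{OR}}(S)-r(S)$. *)

theory Defs
  imports Complex_Main
begin

(* Price vectors are functions 'a => real (only values on Omega matter). Allocations are 'b => 'a set (only values on B matter). *)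

definition price :: "('a \<Rightarrow> real) \<Rightarrow> 'a set \<Rightarrow> real" where
  "price p S = (\<Sum>j\<in>S. p j)"

definition demand :: "'a set \<Rightarrow> ('a set \<Rightarrow> real) \<Rightarrow> ('a \<Rightarrow> real) \<Rightarrow> 'a set set" where
  "demand \<Omega> u p = {S. S \<subseteq> \<Omega> \<and> (\<forall>T. T \<subseteq> \<Omega> \<longrightarrow> u T - price p T \<le> u S - price p S)}"

definition monotone_valuation :: "'a set \<Rightarrow> ('a set \<Rightarrow> real) \<Rightarrow> bool" where
  "monotone_valuation \<Omega> u \<longleftrightarrow> u {} = 0 \<and> (\<forall>S T. S \<subseteq> T \<and> T \<subseteq> \<Omega> \<longrightarrow> u S \<le> u T)"

definition gross_substitute :: "'a set \<Rightarrow> ('a set \<Rightarrow> real) \<Rightarrow> bool" where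
  "gross_substitute \<Omega> u \<longleftrightarrow>
     (\<forall>p1 p2. (\<forall>j\<in>\<Omega>. 0 \<le> p1 j \<and> p1 j \<le> p2 j) \<longrightarrow>
        (\<forall>D1\<in>demand \<Omega> u p1. \<exists>D2\<in>demand \<Omega> u p2. {j\<in>D1. p1 j = p2 j} \<subseteq> D2))"

definition is_alloc :: "'b set \<Rightarrow> 'a set \<Rightarrow> ('b \<Rightarrow> 'a set) \<Rightarrow> bool" where
  "is_alloc B T A \<longleftrightarrow> (\<forall>b\<in>B. A b \<subseteq> T) \<and> (\<forall>b\<in>B. \<forall>b'\<in>B. b \<noteq> b' \<longrightarrow> A b \<inter> A b' = {})"

definition envy_free :: "('b \<Rightarrow> 'a set \<Rightarrow> real) \<Rightarrow> 'b set \<Rightarrow> 'a set \<Rightarrow> ('a \<Rightarrow> real) \<Rightarrow> ('b \<Rightarrow> 'a set) \<Rightarrow> bool" where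
  "envy_free v B T p A \<longleftrightarrow> is_alloc B T A \<and>
     (\<forall>b\<in>B. \<forall>U. U \<subseteq> T \<longrightarrow> v b U - price p U \<le> v b (A b) - price p (A b))"

definition ef_price :: "'a set \<Rightarrow> ('b \<Rightarrow> 'a set \<Rightarrow> real) \<Rightarrow> 'b set \<Rightarrow> 'a set \<Rightarrow> ('a \<Rightarrow> real) \<Rightarrow> ('a \<Rightarrow> real) \<Rightarrow> bool" where
  "ef_price \<Omega> v B T r p \<longleftrightarrow> (\<forall>j\<in>\<Omega>. r j \<le> p j) \<and> (\<exists>A. envy_free v B T p A)"

definition minimal_ef_price :: "'a set \<Rightarrow> ('b \<Rightarrow> 'a set \<Rightarrow> real) \<Rightarrow> 'b set \<Rightarrow> 'a set \<Rightarrow> ('a \<Rightarrow> real) \<Rightarrow> ('a \<Rightarrow> real) \<Rightarrow> bool" where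
  "minimal_ef_price \<Omega> v B T r p \<longleftrightarrow> ef_price \<Omega> v B T r p \<and>
     \<not> (\<exists>q. ef_price \<Omega> v B T r q \<and> (\<forall>j\<in>\<Omega>. q j \<le> p j) \<and> (\<exists>j\<in>\<Omega>. q j < p j)) \<and>
     (\<forall>j\<in>\<Omega> - T. p j = r j)"

definition va_alloc :: "('b \<Rightarrow> 'a set \<Rightarrow> real) \<Rightarrow> 'b set \<Rightarrow> 'a set \<Rightarrow> ('a \<Rightarrow> real) \<Rightarrow> ('b \<Rightarrow> 'a set) \<Rightarrow> bool" where
  "va_alloc v B T p A \<longleftrightarrow> envy_free v B T p A \<and>
     (\<forall>A'. envy_free v B T p A' \<longrightarrow> (\<Sum>b\<in>B. price p (A' b)) \<le> (\<Sum>b\<in>B. price p (A b)))"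

(* pS S and AS S are the price vector and allocation computed by the virtual auction for S *)
definition virtual_auction :: "'a set \<Rightarrow> ('b \<Rightarrow> 'a set \<Rightarrow> real) \<Rightarrow> 'b set \<Rightarrow> ('a \<Rightarrow> real) \<Rightarrow>
    ('a set \<Rightarrow> 'a \<Rightarrow> real) \<Rightarrow> ('a set \<Rightarrow> 'b \<Rightarrow> 'a set) \<Rightarrow> bool" where
  "virtual_auction \<Omega> v B r pS AS \<longleftrightarrow>
     (\<forall>S. S \<subseteq> \<Omega> \<longrightarrow> minimal_ef_price \<Omega> v B S r (pS S) \<and> va_alloc v B S (pS S) (AS S))"

definition mediator_revenue :: "'a set \<Rightarrow> ('b \<Rightarrow> 'a set \<Rightarrow> real) \<Rightarrow> 'b set \<Rightarrow> ('a \<Rightarrow> real) \<Rightarrow>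
    ('a \<Rightarrow> real) \<Rightarrow> ('b \<Rightarrow> 'a set) \<Rightarrow> 'a set \<Rightarrow> real" where
  "mediator_revenue \<Omega> v B r p A S =
     (if \<forall>b\<in>B. A b \<in> demand \<Omega> (v b) p
      then (\<Sum>b\<in>B. price p (A b)) - price r S else -1)"

definition mediator_demand :: "'a set \<Rightarrow> ('b \<Rightarrow> 'a set \<Rightarrow> real) \<Rightarrow> 'b set \<Rightarrow> ('a \<Rightarrow> real) \<Rightarrow>
    ('a set \<Rightarrow> 'a \<Rightarrow> real) \<Rightarrow> ('a set \<Rightarrow> 'b \<Rightarrow> 'a set) \<Rightarrow> 'a set set" where
  "mediator_demand \<Omega> v B r pS AS =
     {S. S \<subseteq> \<Omega> \<and> (\<forall>T. T \<subseteq> \<Omega> \<longrightarrow>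
        mediator_revenue \<Omega> v B r (pS T) (AS T) T \<le> mediator_revenue \<Omega> v B r (pS S) (AS S) S)}"

definition v_OR :: "('b \<Rightarrow> 'a set \<Rightarrow> real) \<Rightarrow> 'b set \<Rightarrow> 'a set \<Rightarrow> real" where
  "v_OR v B S = Max {(\<Sum>b\<in>B. v b (A b)) | A. is_alloc B S A}"

definition OR_optimal :: "('b \<Rightarrow> 'a set \<Rightarrow> real) \<Rightarrow> 'b set \<Rightarrow> 'a set \<Rightarrow> ('b \<Rightarrow> 'a set) \<Rightarrow> bool" where
  "OR_optimal v B S A \<longleftrightarrow> is_alloc B S A \<and> (\<Sum>b\<in>B. v b (A b)) = v_OR v B S"

definition OR_demand :: "'a set \<Rightarrow> ('b \<Rightarrow> 'a set \<Rightarrow> real) \<Rightarrow> 'b set \<Rightarrow> ('a \<Rightarrow> real) \<Rightarrow> 'a set set" where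
  "OR_demand \<Omega> v B r = demand \<Omega> (v_OR v B) r"

end

theory Submission
  imports Defs "HOL-Library.FuncSet" "HOL-Library.Infinite_Set"
begin

text \<open>Gross substitutability makes every bidder's indirect utility, and hence the Lyapunov function
  \<open>L q = (\<Sum>b\<in>B. max\<^sub>X (v b X - q(X))) + q(\<Omega>)\<close>, submodular in the prices. For reserve prices \<open>c \<le> q\<close>,
  \<open>L q\<close> bounds the welfare of every allocation (unsold items valued at \<open>c\<close>), with equality exactly
  at Walrasian equilibria. Hence the minimum of two equilibrium price vectors is again one, and since
  equilibria exist (as limits of ascending \<open>\<epsilon>\<close>-auctions) there are least Walrasian prices.
  Pricing the items outside \<open>S\<close> prohibitively, the virtual auction's minimal envy-free prices for
  \<open>S\<close> are the least Walrasian prices of the market restricted to \<open>S\<close>. If \<open>S\<close> is demanded by the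
  OR-player they are the least Walrasian prices \<open>p\<^sup>*\<close> of the whole market, which support every
  optimal allocation of \<open>S\<close>, and the mediator earns \<open>p\<^sup>*(\<Omega>) - r(\<Omega>)\<close>; for any other \<open>S\<close> she earns
  less, and earning that much forces \<open>S\<close> into the OR-player's demand.\<close>

section \<open>Prices, demand and indirect utility\<close>

lemma price_cong: "(\<And>j. j \<in> X \<Longrightarrow> q j = q' j) \<Longrightarrow> price q X = price q' X"
  unfolding price_def by (rule sum.cong) auto

lemma price_mono: "(\<And>j. j \<in> X \<Longrightarrow> q j \<le> q' j) \<Longrightarrow> price q X \<le> price q' X"
  unfolding price_def by (rule sum_mono) auto

lemma price_nonneg: "(\<And>j. j \<in> X \<Longrightarrow> 0 \<le> q j) \<Longrightarrow> 0 \<le> price q X"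
  unfolding price_def by (rule sum_nonneg) auto

lemma price_Diff: "finite Y \<Longrightarrow> X \<subseteq> Y \<Longrightarrow> price q Y = price q X + price q (Y - X)"
  unfolding price_def by (simp add: sum.subset_diff)

lemma price_insert: "finite X \<Longrightarrow> i \<notin> X \<Longrightarrow> price q (insert i X) = q i + price q X"
  unfolding price_def by simp

definition raise_at :: "('a \<Rightarrow> real) \<Rightarrow> 'a \<Rightarrow> real \<Rightarrow> 'a \<Rightarrow> real" where
  "raise_at q i a = q(i := q i + a)"

lemma raise_at_commute: "i \<noteq> j \<Longrightarrow> raise_at (raise_at q i a) j c = raise_at (raise_at q j c) i a"
  unfolding raise_at_def by (rule ext) auto

lemma price_raise_at: "finite X \<Longrightarrow> price (raise_at q i a) X = price q X + (if i \<in> X then a else 0)"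
proof (cases "i \<in> X")
  case True
  assume "finite X"
  then have "price (raise_at q i a) X = (q i + a) + price q (X - {i})"
    and "price q X = q i + price q (X - {i})"
    using True unfolding price_def raise_at_def by (simp_all add: sum.remove)
  then show ?thesis using True by simp
qed (auto intro!: price_cong simp: raise_at_def)

definition max_utility :: "'a set set \<Rightarrow> ('a set \<Rightarrow> real) \<Rightarrow> ('a \<Rightarrow> real) \<Rightarrow> real" where
  "max_utility \<X> u q = Max ((\<lambda>X. u X - price q X) ` \<X>)"

abbreviation indirect_utility :: "'a set \<Rightarrow> ('a set \<Rightarrow> real) \<Rightarrow> ('a \<Rightarrow> real) \<Rightarrow> real" where
  "indirect_utility \<Omega> \<equiv> max_utility (Pow \<Omega>)"

lemma max_utility_ge: "finite \<X> \<Longrightarrow> X \<in> \<X> \<Longrightarrow> u X - price q X \<le> max_utility \<X> u q"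
  unfolding max_utility_def by (rule Max_ge) auto

lemma max_utility_attained:
  "finite \<X> \<Longrightarrow> \<X> \<noteq> {} \<Longrightarrow> \<exists>X\<in>\<X>. u X - price q X = max_utility \<X> u q"
proof -
  assume "finite \<X>" "\<X> \<noteq> {}"
  then have "max_utility \<X> u q \<in> (\<lambda>X. u X - price q X) ` \<X>"
    unfolding max_utility_def by (intro Max_in) auto
  then show ?thesis by auto
qed

lemma max_utility_Un:
  "finite \<X> \<Longrightarrow> finite \<Y> \<Longrightarrow> \<X> \<noteq> {} \<Longrightarrow> \<Y> \<noteq> {} \<Longrightarrow>
   max_utility (\<X> \<union> \<Y>) u q = max (max_utility \<X> u q) (max_utility \<Y> u q)"
  unfolding max_utility_def image_Un by (rule Max_Un) auto

lemma max_utility_shift: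
  assumes "finite \<X>" "\<X> \<noteq> {}" and "\<And>X. X \<in> \<X> \<Longrightarrow> price q' X = price q X + a"
  shows "max_utility \<X> u q' = max_utility \<X> u q - a"
proof -
  have "(\<lambda>X. u X - price q' X) ` \<X> = (\<lambda>X. (u X - price q X) + - a) ` \<X>"
    using assms(3) by (intro image_cong) auto
  then show ?thesis
    unfolding max_utility_def using Max_add_commute[of \<X> "\<lambda>X. u X - price q X" "- a"] assms(1,2) by simp
qed

lemma max_utility_cong:
  "(\<And>X. X \<in> \<X> \<Longrightarrow> price q X = price q' X) \<Longrightarrow> max_utility \<X> u q = max_utility \<X> u q'"
  unfolding max_utility_def by (intro arg_cong[where f=Max] image_cong) auto

lemma indirect_utility_cong:
  "(\<And>j. j \<in> \<Omega> \<Longrightarrow> q j = q' j) \<Longrightarrow> indirect_utility \<Omega> u q = indirect_utility \<Omega> u q'"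
  by (rule max_utility_cong) (auto intro!: price_cong)

lemma demand_iff_indirect_utility:
  assumes "finite \<Omega>"
  shows "X \<in> demand \<Omega> u q \<longleftrightarrow> X \<subseteq> \<Omega> \<and> u X - price q X = indirect_utility \<Omega> u q"
proof -
  obtain Y where "Y \<subseteq> \<Omega>" "u Y - price q Y = indirect_utility \<Omega> u q"
    using max_utility_attained[of "Pow \<Omega>" u q] assms by auto
  moreover have "\<And>T. T \<subseteq> \<Omega> \<Longrightarrow> u T - price q T \<le> indirect_utility \<Omega> u q"
    using assms by (intro max_utility_ge) auto
  ultimately show ?thesis unfolding demand_def by (smt (verit) mem_Collect_eq)
qed

lemma demand_nonempty: "finite \<Omega> \<Longrightarrow> demand \<Omega> u q \<noteq> {}"
  using max_utility_attained[of "Pow \<Omega>" u q] demand_iff_indirect_utility[of \<Omega> _ u q] by blast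

lemma demand_cong: "(\<And>j. j \<in> \<Omega> \<Longrightarrow> q j = q' j) \<Longrightarrow> demand \<Omega> u q = demand \<Omega> u q'"
proof -
  assume "\<And>j. j \<in> \<Omega> \<Longrightarrow> q j = q' j"
  then have "\<And>X. X \<subseteq> \<Omega> \<Longrightarrow> price q X = price q' X" by (auto intro: price_cong)
  then show ?thesis unfolding demand_def by auto
qed

lemma demand_raise_unbought:
  assumes "X \<in> demand \<Omega> u q" and "\<And>j. j \<in> \<Omega> \<Longrightarrow> q j \<le> q' j" and "\<And>j. j \<in> X \<Longrightarrow> q j = q' j"
  shows "X \<in> demand \<Omega> u q'"
proof -
  have "u T - price q' T \<le> u X - price q' X" if "T \<subseteq> \<Omega>" for T
  proof -
    have "price q T \<le> price q' T" using that assms(2) by (intro price_mono) auto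
    moreover have "price q X = price q' X" using assms(3) by (rule price_cong)
    moreover have "u T - price q T \<le> u X - price q X" using assms(1) that unfolding demand_def by blast
    ultimately show ?thesis by linarith
  qed
  then show ?thesis using assms(1) unfolding demand_def by auto
qed

section \<open>Gross substitutes and submodularity\<close>

lemma indirect_utility_raise_at:
  assumes "finite \<Omega>" and "i \<in> \<Omega>"
  shows "indirect_utility \<Omega> u (raise_at q i a) =
    max (max_utility {X\<in>Pow \<Omega>. i \<notin> X} u q) (max_utility {X\<in>Pow \<Omega>. i \<in> X} u q - a)"
proof -
  have split: "Pow \<Omega> = {X\<in>Pow \<Omega>. i \<notin> X} \<union> {X\<in>Pow \<Omega>. i \<in> X}" by auto
  have ne: "{X\<in>Pow \<Omega>. i \<notin> X} \<noteq> {}" "{X\<in>Pow \<Omega>. i \<in> X} \<noteq> {}"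
    using assms(2) by blast+
  have fin: "finite {X\<in>Pow \<Omega>. P X}" for P using assms(1) by simp
  have "max_utility {X\<in>Pow \<Omega>. i \<notin> X} u (raise_at q i a) = max_utility {X\<in>Pow \<Omega>. i \<notin> X} u q"
    using assms(1) by (intro max_utility_cong) (auto simp: price_raise_at finite_subset)
  moreover have "max_utility {X\<in>Pow \<Omega>. i \<in> X} u (raise_at q i a) = max_utility {X\<in>Pow \<Omega>. i \<in> X} u q - a"
    using ne assms(1) by (intro max_utility_shift) (auto simp: price_raise_at finite_subset)
  ultimately show ?thesis by (subst split, subst max_utility_Un) (use fin ne in auto)
qed

lemma max_utility_without_item_le:
  assumes fin: "finite \<Omega>" and mono: "monotone_valuation \<Omega> u" and i: "i \<in> \<Omega>"
  shows "max_utility {X\<in>Pow \<Omega>. i \<notin> X} u q - q i \<le> max_utility {X\<in>Pow \<Omega>. i \<in> X} u q"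
proof -
  obtain X where X: "X \<subseteq> \<Omega>" "i \<notin> X" "u X - price q X = max_utility {X\<in>Pow \<Omega>. i \<notin> X} u q"
    using max_utility_attained[of "{X\<in>Pow \<Omega>. i \<notin> X}" u q] fin by auto
  have "u (insert i X) - price q (insert i X) \<le> max_utility {X\<in>Pow \<Omega>. i \<in> X} u q"
    using X i fin by (intro max_utility_ge) auto
  moreover have "price q (insert i X) = q i + price q X"
    using X fin by (simp add: price_insert finite_subset)
  moreover have "u X \<le> u (insert i X)"
    using mono X(1) i unfolding monotone_valuation_def by (meson insert_subset subset_insertI)
  ultimately show ?thesis using X(3) by linarith
qed

text \<open>Raising the price of an item \<open>j\<close> can only make bundles containing another item \<open>i\<close>
  relatively more attractive: shift the price of \<open>i\<close> until the best bundles with and without \<open>i\<close>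
  tie, and gross substitutability keeps a bundle containing \<open>i\<close> demanded when \<open>j\<close> gets dearer.\<close>

lemma gross_substitute_utility_with_item_mono:
  assumes fin: "finite \<Omega>" and mono: "monotone_valuation \<Omega> u" and gs: "gross_substitute \<Omega> u"
    and i: "i \<in> \<Omega>" and j: "j \<in> \<Omega>" and "i \<noteq> j"
    and x: "\<And>k. k \<in> \<Omega> \<Longrightarrow> 0 \<le> x k" and c: "0 \<le> c"
  defines "with_i \<equiv> max_utility {X\<in>Pow \<Omega>. i \<in> X} u"
    and "without_i \<equiv> max_utility {X\<in>Pow \<Omega>. i \<notin> X} u"
  shows "with_i x - without_i x \<le> with_i (raise_at x j c) - without_i (raise_at x j c)"
proof -
  have shift: "with_i (raise_at q i a) = with_i q - a" "without_i (raise_at q i a) = without_i q" for q a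
    unfolding with_i_def without_i_def using i fin
    by (auto intro!: max_utility_shift max_utility_cong simp: price_raise_at finite_subset)
  define t where "t = with_i x - without_i x"
  define p1 where "p1 = raise_at x i t"
  define p2 where "p2 = raise_at p1 j c"
  have "- x i \<le> t"
    using max_utility_without_item_le[OF fin mono i, of x] unfolding t_def with_i_def without_i_def
    by linarith
  then have p12: "\<And>k. k \<in> \<Omega> \<Longrightarrow> 0 \<le> p1 k \<and> p1 k \<le> p2 k"
    using x c unfolding p1_def p2_def raise_at_def by auto
  obtain D1 where D1: "D1 \<subseteq> \<Omega>" "i \<in> D1" "u D1 - price p1 D1 = with_i p1"
    using max_utility_attained[of "{X\<in>Pow \<Omega>. i \<in> X}" u p1] fin i unfolding with_i_def by auto
  have "indirect_utility \<Omega> u p1 = with_i p1"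
    using indirect_utility_raise_at[OF fin i, of u x t] shift unfolding p1_def t_def with_i_def without_i_def
    by simp
  then have "D1 \<in> demand \<Omega> u p1" using D1 fin by (simp add: demand_iff_indirect_utility)
  then obtain D2 where D2: "D2 \<in> demand \<Omega> u p2" "{k\<in>D1. p1 k = p2 k} \<subseteq> D2"
    using gs p12 unfolding gross_substitute_def by blast
  have "i \<in> D2" using D2(2) D1(2) \<open>i \<noteq> j\<close> unfolding p2_def raise_at_def by auto
  then have "u D2 - price p2 D2 \<le> with_i p2"
    using D2(1) fin unfolding with_i_def demand_def by (intro max_utility_ge) auto
  then have "indirect_utility \<Omega> u p2 \<le> with_i p2"
    using D2(1) by (simp add: demand_iff_indirect_utility[OF fin])
  moreover have "p2 = raise_at (raise_at x j c) i t"
    unfolding p2_def p1_def using raise_at_commute[OF \<open>i \<noteq> j\<close>] by simp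
  ultimately have "without_i (raise_at x j c) \<le> with_i (raise_at x j c) - t"
    using indirect_utility_raise_at[OF fin i, of u "raise_at x j c" t] shift
    unfolding with_i_def without_i_def by simp
  then show ?thesis unfolding t_def by simp
qed

lemma gross_substitute_decreasing_differences:
  assumes fin: "finite \<Omega>" and "monotone_valuation \<Omega> u" and "gross_substitute \<Omega> u"
    and i: "i \<in> \<Omega>" and "j \<in> \<Omega>" and "i \<noteq> j"
    and "\<And>k. k \<in> \<Omega> \<Longrightarrow> 0 \<le> x k" and a: "0 \<le> a" and "0 \<le> c"
  shows "indirect_utility \<Omega> u (raise_at (raise_at x j c) i a) - indirect_utility \<Omega> u (raise_at x j c)
    \<le> indirect_utility \<Omega> u (raise_at x i a) - indirect_utility \<Omega> u x"
proof -
  define y where "y = raise_at x j c"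
  let ?with = "max_utility {X\<in>Pow \<Omega>. i \<in> X} u" and ?without = "max_utility {X\<in>Pow \<Omega>. i \<notin> X} u"
  have "?with x - ?without x \<le> ?with y - ?without y"
    unfolding y_def by (rule gross_substitute_utility_with_item_mono) (use assms in auto)
  moreover have split: "indirect_utility \<Omega> u (raise_at q i b) = max (?without q) (?with q - b)" for q b
    by (rule indirect_utility_raise_at[OF fin i])
  moreover have "indirect_utility \<Omega> u q = max (?without q) (?with q)" for q
    using split[of q 0] unfolding raise_at_def by simp
  ultimately show ?thesis
    using a unfolding y_def[symmetric] by (simp add: max_def)
qed

text \<open>A function of prices with decreasing differences in every two distinct items is submodular on
  nonnegative prices; the step from two items to arbitrary coordinatewise increases is an induction
  over the items that change.\<close>

locale pairwise_decreasing_differences =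
  fixes \<Omega> :: "'a set" and f :: "('a \<Rightarrow> real) \<Rightarrow> real"
  assumes finite_items: "finite \<Omega>"
    and f_cong: "\<And>p q. (\<And>k. k \<in> \<Omega> \<Longrightarrow> p k = q k) \<Longrightarrow> f p = f q"
    and decreasing_differences: "\<And>x i j a c. i \<in> \<Omega> \<Longrightarrow> j \<in> \<Omega> \<Longrightarrow> i \<noteq> j \<Longrightarrow>
      (\<And>k. k \<in> \<Omega> \<Longrightarrow> 0 \<le> x k) \<Longrightarrow> 0 \<le> a \<Longrightarrow> 0 \<le> c \<Longrightarrow>
      f (raise_at (raise_at x j c) i a) - f (raise_at x j c) \<le> f (raise_at x i a) - f x"
begin

lemma decreasing_differences_raise_set:
  assumes "finite J" "J \<subseteq> \<Omega>" "i \<in> \<Omega>" "i \<notin> J" "0 \<le> a"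
    and "\<And>k. k \<in> \<Omega> \<Longrightarrow> 0 \<le> x k" and "\<And>k. k \<in> \<Omega> \<Longrightarrow> x k \<le> y k"
    and "\<And>k. k \<in> \<Omega> \<Longrightarrow> k \<notin> J \<Longrightarrow> y k = x k"
  shows "f (raise_at y i a) - f y \<le> f (raise_at x i a) - f x"
  using assms
proof (induction J arbitrary: y rule: finite_induct)
  case empty
  then have "f y = f x" "f (raise_at y i a) = f (raise_at x i a)"
    by (auto intro!: f_cong simp: raise_at_def)
  then show ?case by simp
next
  case (insert j J)
  define y' where "y' = y(j := x j)"
  have "f (raise_at y' i a) - f y' \<le> f (raise_at x i a) - f x"
    using insert.prems by (intro insert.IH) (auto simp: y'_def)
  moreover have "f (raise_at (raise_at y' j (y j - x j)) i a) - f (raise_at y' j (y j - x j))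
      \<le> f (raise_at y' i a) - f y'"
    using insert.prems by (intro decreasing_differences) (force simp: y'_def intro: order.trans)+
  moreover have "raise_at y' j (y j - x j) = y" unfolding raise_at_def y'_def by (rule ext) simp
  ultimately show ?case by simp
qed

lemma decreasing_differences_disjoint_sets:
  assumes "finite I" "I \<subseteq> \<Omega>" "J \<subseteq> \<Omega>" "I \<inter> J = {}"
    and "\<And>k. k \<in> \<Omega> \<Longrightarrow> 0 \<le> x k"
    and "\<And>k. k \<in> \<Omega> \<Longrightarrow> x k \<le> y k" and "\<And>k. k \<in> \<Omega> \<Longrightarrow> x k \<le> z k"
    and "\<And>k. k \<in> \<Omega> \<Longrightarrow> k \<notin> J \<Longrightarrow> y k = x k" and "\<And>k. k \<in> \<Omega> \<Longrightarrow> k \<notin> I \<Longrightarrow> z k = x k"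
  shows "f (\<lambda>k. y k + z k - x k) - f y \<le> f z - f x"
  using assms
proof (induction I arbitrary: z rule: finite_induct)
  case empty
  then have "f (\<lambda>k. y k + z k - x k) = f y" "f z = f x" by (auto intro!: f_cong)
  then show ?case by simp
next
  case (insert i I)
  define z' where "z' = z(i := x i)"
  define w where "w = (\<lambda>k. y k + z' k - x k)"
  have "f w - f y \<le> f z' - f x"
    using insert.prems unfolding w_def by (intro insert.IH) (auto simp: z'_def)
  moreover have "f (raise_at w i (z i - x i)) - f w \<le> f (raise_at z' i (z i - x i)) - f z'"
    using insert.prems finite_subset[OF _ finite_items]
    by (intro decreasing_differences_raise_set[of J]) (force simp: z'_def w_def intro: order.trans)+
  moreover have "raise_at w i (z i - x i) = (\<lambda>k. y k + z k - x k)" "raise_at z' i (z i - x i) = z"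
    unfolding raise_at_def w_def z'_def by (rule ext, simp)+
  ultimately show ?case by simp
qed

lemma submodular:
  assumes "\<And>k. k \<in> \<Omega> \<Longrightarrow> 0 \<le> p k" and "\<And>k. k \<in> \<Omega> \<Longrightarrow> 0 \<le> q k"
  shows "f (\<lambda>k. min (p k) (q k)) + f (\<lambda>k. max (p k) (q k)) \<le> f p + f q"
proof -
  have "f (\<lambda>k. p k + q k - min (p k) (q k)) - f p \<le> f q - f (\<lambda>k. min (p k) (q k))"
    using assms finite_items
    by (intro decreasing_differences_disjoint_sets[of "{k\<in>\<Omega>. p k < q k}" "{k\<in>\<Omega>. q k < p k}"])
      (auto simp: min_def)
  moreover have "f (\<lambda>k. p k + q k - min (p k) (q k)) = f (\<lambda>k. max (p k) (q k))"
    by (rule f_cong) (simp add: min_def max_def)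
  ultimately show ?thesis by simp
qed

end

section \<open>Allocations and the OR-player\<close>

lemma is_alloc_Union_subset: "is_alloc B T X \<Longrightarrow> (\<Union>b\<in>B. X b) \<subseteq> T"
  unfolding is_alloc_def by auto

lemma is_alloc_mono: "is_alloc B T X \<Longrightarrow> T \<subseteq> T' \<Longrightarrow> is_alloc B T' X"
  unfolding is_alloc_def by auto

lemma is_alloc_Union: "is_alloc B T X \<Longrightarrow> is_alloc B (\<Union>b\<in>B. X b) X"
  unfolding is_alloc_def by auto

lemma price_alloc_Union:
  assumes "finite B" "finite T" "is_alloc B T X"
  shows "price q (\<Union>b\<in>B. X b) = (\<Sum>b\<in>B. price q (X b))"
  unfolding price_def using assms
  by (intro sum.UNION_disjoint) (auto simp: is_alloc_def intro: finite_subset)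

lemma price_alloc_unsold:
  assumes "finite B" "finite T" "is_alloc B T X"
  shows "price q T = (\<Sum>b\<in>B. price q (X b)) + price q (T - (\<Union>b\<in>B. X b))"
  using price_Diff[OF assms(2) is_alloc_Union_subset[OF assms(3)]] price_alloc_Union[OF assms] by simp

lemma v_OR_values_finite:
  assumes "finite B" "finite S"
  shows "finite {(\<Sum>b\<in>B. v b (A b)) | A. is_alloc B S A}"
proof -
  have "{(\<Sum>b\<in>B. v b (A b)) | A. is_alloc B S A} \<subseteq> (\<lambda>A. \<Sum>b\<in>B. v b (A b)) ` (\<Pi>\<^sub>E b\<in>B. Pow S)"
  proof
    fix x assume "x \<in> {(\<Sum>b\<in>B. v b (A b)) | A. is_alloc B S A}"
    then obtain A where "is_alloc B S A" "x = (\<Sum>b\<in>B. v b (A b))" by blast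
    then have "restrict A B \<in> (\<Pi>\<^sub>E b\<in>B. Pow S)" "x = (\<Sum>b\<in>B. v b (restrict A B b))"
      unfolding is_alloc_def by auto
    then show "x \<in> (\<lambda>A. \<Sum>b\<in>B. v b (A b)) ` (\<Pi>\<^sub>E b\<in>B. Pow S)" by blast
  qed
  moreover have "finite (\<Pi>\<^sub>E b\<in>B. Pow S)" using assms by (simp add: finite_PiE)
  ultimately show ?thesis by (rule finite_subset[OF _ finite_imageI])
qed

lemma v_OR_ge: "finite B \<Longrightarrow> finite S \<Longrightarrow> is_alloc B S A \<Longrightarrow> (\<Sum>b\<in>B. v b (A b)) \<le> v_OR v B S"
  unfolding v_OR_def by (rule Max_ge[OF v_OR_values_finite]) auto

lemma OR_optimal_exists: "finite B \<Longrightarrow> finite S \<Longrightarrow> \<exists>A. OR_optimal v B S A"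
proof -
  assume fin: "finite B" "finite S"
  have "is_alloc B S (\<lambda>_. {})" unfolding is_alloc_def by auto
  then have "v_OR v B S \<in> {(\<Sum>b\<in>B. v b (A b)) | A. is_alloc B S A}"
    unfolding v_OR_def using v_OR_values_finite[OF fin] by (intro Max_in) auto
  then show ?thesis unfolding OR_optimal_def by auto
qed

lemma v_OR_mono:
  assumes "finite B" "finite T" "S \<subseteq> T"
  shows "v_OR v B S \<le> v_OR v B T"
proof -
  obtain A where "OR_optimal v B S A"
    using OR_optimal_exists[OF assms(1) finite_subset[OF assms(3,2)]] by blast
  then have "is_alloc B T A" "(\<Sum>b\<in>B. v b (A b)) = v_OR v B S"
    unfolding OR_optimal_def using is_alloc_mono[OF _ assms(3)] by auto
  then show ?thesis using v_OR_ge[OF assms(1,2)] by metis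
qed

lemma price_mono_subset:
  assumes "finite Y" "X \<subseteq> Y" "\<And>j. j \<in> Y - X \<Longrightarrow> 0 \<le> q j"
  shows "price q X \<le> price q Y"
proof -
  have "0 \<le> price q (Y - X)" using assms(3) by (rule price_nonneg)
  then show ?thesis using price_Diff[OF assms(1,2), of q] by linarith
qed

lemma OR_demand_iff:
  "S \<in> OR_demand \<Omega> v B r \<longleftrightarrow> S \<subseteq> \<Omega> \<and> (\<forall>T. T \<subseteq> \<Omega> \<longrightarrow> v_OR v B T - price r T \<le> v_OR v B S - price r S)"
  unfolding OR_demand_def demand_def by simp

lemma envy_free_if_demand:
  assumes "is_alloc B S A" "S \<subseteq> \<Omega>" "\<And>b. b \<in> B \<Longrightarrow> A b \<in> demand \<Omega> (v b) p"
  shows "envy_free v B S p A"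
  unfolding envy_free_def
proof (intro conjI ballI allI impI)
  fix b U assume "b \<in> B" "U \<subseteq> S"
  then show "v b U - price p U \<le> v b (A b) - price p (A b)"
    using assms(2,3) unfolding demand_def by blast
qed (rule assms(1))

section \<open>Walrasian equilibria with reserve prices\<close>

lemma bounded_coordinates_convergent_subseq:
  fixes s :: "nat \<Rightarrow> 'c \<Rightarrow> real"
  assumes "finite F"
  shows "(\<And>j k. j \<in> F \<Longrightarrow> lo j \<le> s k j \<and> s k j \<le> hi j) \<Longrightarrow>
    \<exists>r. strict_mono r \<and> (\<forall>j\<in>F. convergent (\<lambda>k. s (r k) j))"
  using assms
proof (induction F rule: finite_induct)
  case empty
  show ?case by (rule exI[of _ id]) (simp add: strict_mono_def)
next
  case (insert j F)
  obtain r where r: "strict_mono r" "\<forall>i\<in>F. convergent (\<lambda>k. s (r k) i)"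
    using insert.IH insert.prems by blast
  obtain f where f: "strict_mono f" "monoseq (\<lambda>n. s (r (f n)) j)"
    using seq_monosub[of "\<lambda>k. s (r k) j"] by blast
  have "range (\<lambda>n. s (r (f n)) j) \<subseteq> {lo j..hi j}" using insert.prems by auto
  then have "Bseq (\<lambda>n. s (r (f n)) j)" by (rule Bseq_eq_bounded)
  then have cj: "convergent (\<lambda>n. s (r (f n)) j)" using f(2) by (rule Bseq_monoseq_convergent)
  have ci: "convergent (\<lambda>k. s (r (f k)) i)" if i: "i \<in> F" for i
  proof -
    obtain l where "(\<lambda>k. s (r k) i) \<longlonglongrightarrow> l" using r(2) i convergentD by blast
    then have "((\<lambda>k. s (r k) i) \<circ> f) \<longlonglongrightarrow> l" using f(1) by (rule LIMSEQ_subseq_LIMSEQ)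
    then show ?thesis unfolding convergent_def comp_def by blast
  qed
  have "strict_mono (r \<circ> f)" using r(1) f(1) by (rule strict_mono_o)
  then show ?case using cj ci by (intro exI[of _ "r \<circ> f"]) (auto simp: comp_def)
qed

lemma finite_range_constant_subseq:
  fixes g :: "nat \<Rightarrow> 'c"
  assumes "finite (range g)"
  obtains r :: "nat \<Rightarrow> nat" where "strict_mono r" "\<And>k. g (r k) = g (r 0)"
proof -
  obtain n0 where "infinite {n \<in> UNIV. g n = g n0}"
    using pigeonhole_infinite[OF infinite_UNIV_nat assms] by blast
  from infinite_enumerate[OF this] obtain r :: "nat \<Rightarrow> nat"
    where "strict_mono r" "\<forall>k. g (r k) = g n0"
    by auto
  then show ?thesis using that by simp
qed

locale gs_market =
  fixes \<Omega> :: "'a set" and B :: "'b set" and v :: "'b \<Rightarrow> 'a set \<Rightarrow> real"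
  assumes finite_items: "finite \<Omega>" and finite_bidders: "finite B"
    and monotone: "\<And>b. b \<in> B \<Longrightarrow> monotone_valuation \<Omega> (v b)"
    and gross_substitute: "\<And>b. b \<in> B \<Longrightarrow> gross_substitute \<Omega> (v b)"
begin

lemma valuation_mono: "b \<in> B \<Longrightarrow> X \<subseteq> Y \<Longrightarrow> Y \<subseteq> \<Omega> \<Longrightarrow> v b X \<le> v b Y"
  using monotone unfolding monotone_valuation_def by blast

lemma valuation_nonneg: "b \<in> B \<Longrightarrow> X \<subseteq> \<Omega> \<Longrightarrow> 0 \<le> v b X"
  using valuation_mono[of b "{}" X] monotone[of b] by (simp add: monotone_valuation_def)

definition total_indirect_utility :: "('a \<Rightarrow> real) \<Rightarrow> real" where
  "total_indirect_utility q = (\<Sum>b\<in>B. indirect_utility \<Omega> (v b) q)"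

sublocale total_indirect_utility: pairwise_decreasing_differences \<Omega> total_indirect_utility
proof
  show "finite \<Omega>" by (rule finite_items)
  show "total_indirect_utility p = total_indirect_utility q" if "\<And>k. k \<in> \<Omega> \<Longrightarrow> p k = q k" for p q
    unfolding total_indirect_utility_def using that by (intro sum.cong indirect_utility_cong) auto
  fix x :: "'a \<Rightarrow> real" and i j and a c :: real
  assume "i \<in> \<Omega>" "j \<in> \<Omega>" "i \<noteq> j" "\<And>k. k \<in> \<Omega> \<Longrightarrow> 0 \<le> x k" "0 \<le> a" "0 \<le> c"
  then show "total_indirect_utility (raise_at (raise_at x j c) i a) - total_indirect_utility (raise_at x j c)
    \<le> total_indirect_utility (raise_at x i a) - total_indirect_utility x"
    unfolding total_indirect_utility_def sum_subtractf[symmetric]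
    by (intro sum_mono gross_substitute_decreasing_differences finite_items monotone gross_substitute)
qed

definition lyapunov :: "('a \<Rightarrow> real) \<Rightarrow> real" where
  "lyapunov q = total_indirect_utility q + price q \<Omega>"

text \<open>The seller values unsold items at the reserve prices \<open>c\<close>.\<close>

definition welfare :: "('a \<Rightarrow> real) \<Rightarrow> ('b \<Rightarrow> 'a set) \<Rightarrow> real" where
  "welfare c X = (\<Sum>b\<in>B. v b (X b)) + price c (\<Omega> - (\<Union>b\<in>B. X b))"

definition walrasian :: "('a \<Rightarrow> real) \<Rightarrow> ('a \<Rightarrow> real) \<Rightarrow> ('b \<Rightarrow> 'a set) \<Rightarrow> bool" where
  "walrasian c q X \<longleftrightarrow> is_alloc B \<Omega> X \<and> (\<forall>b\<in>B. X b \<in> demand \<Omega> (v b) q) \<and> (\<forall>j\<in>\<Omega>. c j \<le> q j) \<and>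
     (\<forall>j\<in>\<Omega> - (\<Union>b\<in>B. X b). q j = c j)"

lemma lyapunov_eq_utility_gaps:
  assumes "is_alloc B \<Omega> X"
  shows "lyapunov q =
    (\<Sum>b\<in>B. indirect_utility \<Omega> (v b) q - (v b (X b) - price q (X b))) + welfare q X"
  using price_alloc_unsold[OF finite_bidders finite_items assms, of q]
  unfolding lyapunov_def welfare_def total_indirect_utility_def
  by (simp add: sum_subtractf sum.distrib)

lemma utility_gap_nonneg:
  "is_alloc B \<Omega> X \<Longrightarrow> b \<in> B \<Longrightarrow> 0 \<le> indirect_utility \<Omega> (v b) q - (v b (X b) - price q (X b))"
  using max_utility_ge[of "Pow \<Omega>" "X b" "v b" q] finite_items unfolding is_alloc_def by auto

lemma welfare_mono:
  assumes "\<And>j. j \<in> \<Omega> \<Longrightarrow> c j \<le> q j"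
  shows "welfare c X \<le> welfare q X"
  unfolding welfare_def using assms by (auto intro!: price_mono)

lemma welfare_le_lyapunov:
  assumes "is_alloc B \<Omega> X" and "\<And>j. j \<in> \<Omega> \<Longrightarrow> c j \<le> q j"
  shows "welfare c X \<le> lyapunov q"
proof -
  have "0 \<le> (\<Sum>b\<in>B. indirect_utility \<Omega> (v b) q - (v b (X b) - price q (X b)))"
    using utility_gap_nonneg[OF assms(1)] by (rule sum_nonneg)
  moreover have "welfare c X \<le> welfare q X" using assms(2) by (rule welfare_mono)
  ultimately show ?thesis using lyapunov_eq_utility_gaps[OF assms(1), of q] by linarith
qed

lemma lyapunov_eq_welfare:
  assumes "walrasian c q X"
  shows "lyapunov q = welfare c X"
proof -
  have "X b \<in> demand \<Omega> (v b) q \<Longrightarrow> indirect_utility \<Omega> (v b) q - (v b (X b) - price q (X b)) = 0" for b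
    by (simp add: demand_iff_indirect_utility[OF finite_items])
  moreover have "welfare q X = welfare c X"
    using assms unfolding welfare_def walrasian_def by (auto intro: price_cong)
  ultimately show ?thesis
    using assms lyapunov_eq_utility_gaps[of X q] unfolding walrasian_def by simp
qed

lemma walrasian_if_lyapunov_le_welfare:
  assumes cq: "\<And>j. j \<in> \<Omega> \<Longrightarrow> c j \<le> q j" and X: "is_alloc B \<Omega> X" and le: "lyapunov q \<le> welfare c X"
  shows "walrasian c q X"
proof -
  let ?gap = "\<lambda>b. indirect_utility \<Omega> (v b) q - (v b (X b) - price q (X b))"
  let ?unsold = "\<Omega> - (\<Union>b\<in>B. X b)"
  have "welfare q X = welfare c X + (\<Sum>j\<in>?unsold. q j - c j)"
    unfolding welfare_def price_def by (simp add: sum_subtractf)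
  then have "sum ?gap B + (\<Sum>j\<in>?unsold. q j - c j) \<le> 0"
    using le lyapunov_eq_utility_gaps[OF X, of q] by linarith
  moreover have "0 \<le> sum ?gap B" "0 \<le> (\<Sum>j\<in>?unsold. q j - c j)"
    using utility_gap_nonneg[OF X] cq by (auto intro: sum_nonneg)
  ultimately have "sum ?gap B = 0" "(\<Sum>j\<in>?unsold. q j - c j) = 0" by linarith+
  then have "\<forall>b\<in>B. ?gap b = 0" "\<forall>j\<in>?unsold. q j - c j = 0"
    using sum_nonneg_eq_0_iff[OF finite_bidders, of ?gap] utility_gap_nonneg[OF X]
      sum_nonneg_eq_0_iff[of ?unsold "\<lambda>j. q j - c j"] finite_items cq by auto
  then show ?thesis
    using X cq unfolding walrasian_def is_alloc_def
    by (auto simp: demand_iff_indirect_utility[OF finite_items])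
qed

lemma walrasian_cong:
  assumes "walrasian c q X" "\<And>j. j \<in> \<Omega> \<Longrightarrow> q j = q' j" "\<And>j. j \<in> \<Omega> \<Longrightarrow> c j = c' j"
  shows "walrasian c' q' X"
proof -
  have "demand \<Omega> (v b) q = demand \<Omega> (v b) q'" for b using assms(2) by (rule demand_cong)
  then show ?thesis using assms unfolding walrasian_def by auto
qed

text \<open>The minimum of two equilibrium price vectors is again one, since the Lyapunov function is
  submodular and the price of \<open>\<Omega>\<close> is modular.\<close>

lemma walrasian_min:
  assumes c: "\<And>j. j \<in> \<Omega> \<Longrightarrow> 0 \<le> c j" "\<And>j. j \<in> \<Omega> \<Longrightarrow> c j \<le> c' j"
    and W: "walrasian c p X" and W': "walrasian c' q Y"
  shows "walrasian c (\<lambda>k. min (p k) (q k)) X"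
proof (rule walrasian_if_lyapunov_le_welfare)
  have p: "\<And>j. j \<in> \<Omega> \<Longrightarrow> c j \<le> p j" and q: "\<And>j. j \<in> \<Omega> \<Longrightarrow> c' j \<le> q j"
    using W W' by (auto simp: walrasian_def)
  then show "\<And>j. j \<in> \<Omega> \<Longrightarrow> c j \<le> min (p j) (q j)" using c by (meson min.boundedI order.trans)
  show "is_alloc B \<Omega> X" using W by (simp add: walrasian_def)
  have "total_indirect_utility (\<lambda>k. min (p k) (q k)) + total_indirect_utility (\<lambda>k. max (p k) (q k))
    \<le> total_indirect_utility p + total_indirect_utility q"
    using c p q by (intro total_indirect_utility.submodular) force+
  moreover have "price (\<lambda>k. min (p k) (q k)) \<Omega> + price (\<lambda>k. max (p k) (q k)) \<Omega> = price p \<Omega> + price q \<Omega>"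
    unfolding price_def sum.distrib[symmetric] by (rule sum.cong) (auto simp: min_def max_def)
  moreover have "welfare c' Y \<le> lyapunov (\<lambda>k. max (p k) (q k))"
    using W' q by (intro welfare_le_lyapunov) (auto simp: walrasian_def intro: max.coboundedI2)
  ultimately show "lyapunov (\<lambda>k. min (p k) (q k)) \<le> welfare c X"
    using lyapunov_eq_welfare[OF W] lyapunov_eq_welfare[OF W'] unfolding lyapunov_def by linarith
qed

lemma demanded_item_price_le:
  assumes b: "b \<in> B" and X: "X \<in> demand \<Omega> (v b) q" and j: "j \<in> X"
  shows "q j \<le> v b \<Omega>"
proof -
  have XO: "X \<subseteq> \<Omega>" using X by (simp add: demand_def)
  have "v b (X - {j}) - price q (X - {j}) \<le> v b X - price q X"
    using X XO unfolding demand_def by blast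
  moreover have "price q X = q j + price q (X - {j})"
    using j finite_subset[OF XO finite_items] unfolding price_def by (simp add: sum.remove)
  moreover have "v b X \<le> v b \<Omega>" "0 \<le> v b (X - {j})"
    using b XO by (auto intro: valuation_mono valuation_nonneg)
  ultimately show ?thesis by linarith
qed

lemma demand_keeps_items:
  assumes "b \<in> B" and "D \<in> demand \<Omega> (v b) q" and "\<And>j. j \<in> \<Omega> \<Longrightarrow> 0 \<le> q j \<and> q j \<le> q' j"
    and "Y \<subseteq> D" and "\<And>j. j \<in> Y \<Longrightarrow> q j = q' j"
  shows "\<exists>D'\<in>demand \<Omega> (v b) q'. Y \<subseteq> D'"
proof -
  obtain D' where "D' \<in> demand \<Omega> (v b) q'" "{j\<in>D. q j = q' j} \<subseteq> D'"
    using gross_substitute[OF assms(1)] assms(2,3) unfolding gross_substitute_def by blast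
  then show ?thesis using assms(4,5) by blast
qed

definition value_bound :: real where
  "value_bound = (\<Sum>b\<in>B. v b \<Omega>)"

lemma value_bound_ge: "b \<in> B \<Longrightarrow> v b \<Omega> \<le> value_bound"
  unfolding value_bound_def by (rule member_le_sum) (auto intro: valuation_nonneg finite_bidders)

lemma value_bound_nonneg: "0 \<le> value_bound"
  unfolding value_bound_def by (rule sum_nonneg) (auto intro: valuation_nonneg)

text \<open>States of the ascending \<open>\<epsilon>\<close>-auction with reserve prices \<open>c\<close>: bidder \<open>b\<close> holds \<open>H b\<close>, pays
  \<open>p\<close> on it and faces \<open>p + \<epsilon>\<close> on every other item.\<close>

definition personal_price :: "real \<Rightarrow> ('b \<Rightarrow> 'a set) \<Rightarrow> 'b \<Rightarrow> ('a \<Rightarrow> real) \<Rightarrow> 'a \<Rightarrow> real" where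
  "personal_price \<epsilon> H b p j = (if j \<in> H b then p j else p j + \<epsilon>)"

definition auction_state :: "('a \<Rightarrow> real) \<Rightarrow> real \<Rightarrow> ('a \<Rightarrow> real) \<Rightarrow> ('b \<Rightarrow> 'a set) \<Rightarrow> bool" where
  "auction_state c \<epsilon> p H \<longleftrightarrow> is_alloc B \<Omega> H \<and>
     (\<forall>b\<in>B. \<exists>D\<in>demand \<Omega> (v b) (personal_price \<epsilon> H b p). H b \<subseteq> D) \<and>
     (\<forall>j\<in>\<Omega>. c j \<le> p j \<and> p j \<le> c j + value_bound) \<and> (\<forall>j\<in>\<Omega> - (\<Union>b\<in>B. H b). p j = c j)"

text \<open>A bidder not content with his holdings \<open>H b\<close> takes a demanded superset \<open>D\<close> of them from the
  others, raising the price of each newly taken item by \<open>\<epsilon>\<close>.\<close>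

definition bid_prices :: "real \<Rightarrow> ('b \<Rightarrow> 'a set) \<Rightarrow> 'b \<Rightarrow> 'a set \<Rightarrow> ('a \<Rightarrow> real) \<Rightarrow> 'a \<Rightarrow> real" where
  "bid_prices \<epsilon> H b D p j = (if j \<in> D - H b then p j + \<epsilon> else p j)"

definition bid_holdings :: "('b \<Rightarrow> 'a set) \<Rightarrow> 'b \<Rightarrow> 'a set \<Rightarrow> 'b \<Rightarrow> 'a set" where
  "bid_holdings H b D b' = (if b' = b then D else H b' - D)"

text \<open>The losers' personal prices only rise on items they no longer hold, so by gross
  substitutability they still demand supersets of their remaining holdings.\<close>

lemma auction_bid_keeps_demand:
  assumes c: "\<And>j. j \<in> \<Omega> \<Longrightarrow> 0 \<le> c j" and \<epsilon>: "0 < \<epsilon>" and state: "auction_state c \<epsilon> p H"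
    and D: "D \<in> demand \<Omega> (v b) (personal_price \<epsilon> H b p)" "H b \<subseteq> D" and b': "b' \<in> B"
  shows "\<exists>D'\<in>demand \<Omega> (v b') (personal_price \<epsilon> (bid_holdings H b D) b' (bid_prices \<epsilon> H b D p)).
    bid_holdings H b D b' \<subseteq> D'"
proof (cases "b' = b")
  case True
  have "personal_price \<epsilon> (bid_holdings H b D) b (bid_prices \<epsilon> H b D p) = personal_price \<epsilon> H b p"
    unfolding personal_price_def bid_holdings_def bid_prices_def by (rule ext) (use D(2) in auto)
  then show ?thesis using True D(1) by (auto simp: bid_holdings_def)
next
  case False
  have p0: "0 \<le> p j" if "j \<in> \<Omega>" for j
    using state c[OF that] that unfolding auction_state_def by fastforce
  obtain D1 where D1: "D1 \<in> demand \<Omega> (v b') (personal_price \<epsilon> H b' p)" "H b' \<subseteq> D1"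
    using state b' unfolding auction_state_def by blast
  show ?thesis
  proof (rule demand_keeps_items[OF b' D1(1)])
    show "0 \<le> personal_price \<epsilon> H b' p j \<and>
        personal_price \<epsilon> H b' p j \<le> personal_price \<epsilon> (bid_holdings H b D) b' (bid_prices \<epsilon> H b D p) j"
      if "j \<in> \<Omega>" for j
      using p0[OF that] \<epsilon> False unfolding personal_price_def bid_holdings_def bid_prices_def by auto
    show "bid_holdings H b D b' \<subseteq> D1" using D1(2) False unfolding bid_holdings_def by auto
    show "personal_price \<epsilon> H b' p j = personal_price \<epsilon> (bid_holdings H b D) b' (bid_prices \<epsilon> H b D p) j"
      if "j \<in> bid_holdings H b D b'" for j
      using that False unfolding bid_holdings_def personal_price_def bid_prices_def by auto
  qed
qed

lemma auction_bid_state: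
  assumes c: "\<And>j. j \<in> \<Omega> \<Longrightarrow> 0 \<le> c j" and \<epsilon>: "0 < \<epsilon>" and state: "auction_state c \<epsilon> p H"
    and b: "b \<in> B" and D: "D \<in> demand \<Omega> (v b) (personal_price \<epsilon> H b p)" "H b \<subseteq> D"
  shows "auction_state c \<epsilon> (bid_prices \<epsilon> H b D p) (bid_holdings H b D)"
proof -
  let ?p' = "bid_prices \<epsilon> H b D p" and ?H' = "bid_holdings H b D"
  have DO: "D \<subseteq> \<Omega>" using D(1) by (simp add: demand_def)
  have alloc: "is_alloc B \<Omega> ?H'"
    using state DO unfolding auction_state_def is_alloc_def bid_holdings_def by (auto; blast)
  have bounds: "c j \<le> ?p' j \<and> ?p' j \<le> c j + value_bound" if j: "j \<in> \<Omega>" for j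
  proof (cases "j \<in> D - H b")
    case True
    have "personal_price \<epsilon> H b p j \<le> v b \<Omega>" using True by (intro demanded_item_price_le[OF b D(1)]) auto
    then have "?p' j \<le> value_bound"
      using True value_bound_ge[OF b] unfolding bid_prices_def personal_price_def by auto
    moreover have "c j \<le> p j" using state j unfolding auction_state_def by blast
    ultimately show ?thesis using True \<epsilon> c[OF j] unfolding bid_prices_def by auto
  qed (use state j in \<open>auto simp: auction_state_def bid_prices_def\<close>)
  have unsold: "?p' j = c j" if "j \<in> \<Omega> - (\<Union>b\<in>B. ?H' b)" for j
  proof -
    have "j \<notin> D" using that b unfolding bid_holdings_def by auto
    moreover have "j \<in> \<Omega> - (\<Union>b\<in>B. H b)" using that calculation D(2) unfolding bid_holdings_def by auto
    ultimately show ?thesis using state unfolding auction_state_def bid_prices_def by auto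
  qed
  show ?thesis
    unfolding auction_state_def using alloc auction_bid_keeps_demand[OF assms(1-3) D] bounds unsold by blast
qed

lemma auction_bid_price_increase:
  assumes "0 < \<epsilon>" and "D \<subseteq> \<Omega>" and "j0 \<in> D - H b"
  shows "price p \<Omega> + \<epsilon> \<le> price (bid_prices \<epsilon> H b D p) \<Omega>"
proof -
  have "bid_prices \<epsilon> H b D p j0 - p j0 \<le> (\<Sum>j\<in>\<Omega>. bid_prices \<epsilon> H b D p j - p j)"
    using assms finite_items by (intro member_le_sum) (auto simp: bid_prices_def)
  then show ?thesis using assms(3) unfolding price_def bid_prices_def sum_subtractf by auto
qed

lemma auction_step:
  assumes c: "\<And>j. j \<in> \<Omega> \<Longrightarrow> 0 \<le> c j" and \<epsilon>: "0 < \<epsilon>"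
    and state: "auction_state c \<epsilon> p H" and b: "b \<in> B"
    and discontent: "H b \<notin> demand \<Omega> (v b) (personal_price \<epsilon> H b p)"
  obtains p' H' where "auction_state c \<epsilon> p' H'" and "price p \<Omega> + \<epsilon> \<le> price p' \<Omega>"
proof -
  obtain D where D: "D \<in> demand \<Omega> (v b) (personal_price \<epsilon> H b p)" "H b \<subseteq> D"
    using state b unfolding auction_state_def by blast
  have "H b \<noteq> D" using D(1) discontent by auto
  then obtain j0 where "j0 \<in> D - H b" using D(2) by blast
  moreover have "D \<subseteq> \<Omega>" using D(1) by (simp add: demand_def)
  ultimately show ?thesis
    using that auction_bid_state[OF c \<epsilon> state b D] auction_bid_price_increase[OF \<epsilon>] by blast
qed

text \<open>Each step raises \<open>p(\<Omega>)\<close> by \<open>\<epsilon>\<close>, and prices stay below \<open>c + value_bound\<close>, so the auction stops.\<close>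

lemma auction_terminates:
  assumes c: "\<And>j. j \<in> \<Omega> \<Longrightarrow> 0 \<le> c j" and \<epsilon>: "0 < \<epsilon>"
  shows "auction_state c \<epsilon> p H \<Longrightarrow> price (\<lambda>j. c j + value_bound) \<Omega> - price p \<Omega> < real n * \<epsilon> \<Longrightarrow>
    \<exists>p' H'. auction_state c \<epsilon> p' H' \<and> (\<forall>b\<in>B. H' b \<in> demand \<Omega> (v b) (personal_price \<epsilon> H' b p'))"
proof (induction n arbitrary: p H)
  case 0
  have "price p \<Omega> \<le> price (\<lambda>j. c j + value_bound) \<Omega>"
    using "0.prems"(1) by (intro price_mono) (auto simp: auction_state_def)
  then show ?case using "0.prems"(2) by simp
next
  case (Suc n)
  show ?case
  proof (cases "\<forall>b\<in>B. H b \<in> demand \<Omega> (v b) (personal_price \<epsilon> H b p)")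
    case False
    then obtain b where "b \<in> B" "H b \<notin> demand \<Omega> (v b) (personal_price \<epsilon> H b p)" by blast
    with auction_step[of c \<epsilon>, OF c \<epsilon> Suc.prems(1)] obtain p' H'
      where "auction_state c \<epsilon> p' H'" "price p \<Omega> + \<epsilon> \<le> price p' \<Omega>" by blast
    then show ?thesis using Suc.IH Suc.prems(2) by (simp add: algebra_simps)
  qed (use Suc.prems(1) in blast)
qed

definition approx_walrasian :: "('a \<Rightarrow> real) \<Rightarrow> real \<Rightarrow> ('a \<Rightarrow> real) \<Rightarrow> ('b \<Rightarrow> 'a set) \<Rightarrow> bool" where
  "approx_walrasian c \<delta> p H \<longleftrightarrow> is_alloc B \<Omega> H \<and> (\<forall>j\<in>\<Omega>. c j \<le> p j \<and> p j \<le> c j + value_bound) \<and>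
     (\<forall>j\<in>\<Omega> - (\<Union>b\<in>B. H b). p j = c j) \<and>
     (\<forall>b\<in>B. \<forall>X. X \<subseteq> \<Omega> \<longrightarrow> v b X - price p X - \<delta> \<le> v b (H b) - price p (H b))"

lemma approx_walrasian_cong:
  "(\<And>b. b \<in> B \<Longrightarrow> H b = H' b) \<Longrightarrow> approx_walrasian c \<delta> p H \<longleftrightarrow> approx_walrasian c \<delta> p H'"
  unfolding approx_walrasian_def is_alloc_def by simp

lemma approx_walrasian_exists:
  assumes c: "\<And>j. j \<in> \<Omega> \<Longrightarrow> 0 \<le> c j" and \<delta>: "0 < \<delta>"
  shows "\<exists>p H. approx_walrasian c \<delta> p H"
proof -
  define \<epsilon> where "\<epsilon> = \<delta> / (real (card \<Omega>) + 1)"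
  have \<epsilon>: "0 < \<epsilon>" "\<epsilon> * real (card \<Omega>) \<le> \<delta>"
    using \<delta> unfolding \<epsilon>_def by (auto simp: field_simps)
  have "auction_state c \<epsilon> c (\<lambda>_. {})"
    unfolding auction_state_def is_alloc_def using demand_nonempty[OF finite_items] value_bound_nonneg by auto
  moreover obtain n :: nat where "price (\<lambda>j. c j + value_bound) \<Omega> - price c \<Omega> < real n * \<epsilon>"
    using reals_Archimedean3[OF \<epsilon>(1)] by blast
  ultimately obtain p H where state: "auction_state c \<epsilon> p H"
    and content: "\<forall>b\<in>B. H b \<in> demand \<Omega> (v b) (personal_price \<epsilon> H b p)"
    using auction_terminates[of c \<epsilon>, OF c \<epsilon>(1)] by blast
  have "v b X - price p X - \<delta> \<le> v b (H b) - price p (H b)" if b: "b \<in> B" and X: "X \<subseteq> \<Omega>" for b X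
  proof -
    have "price (personal_price \<epsilon> H b p) X \<le> (\<Sum>j\<in>X. p j + \<epsilon>)"
      unfolding price_def personal_price_def using \<epsilon> by (intro sum_mono) auto
    also have "\<dots> = price p X + \<epsilon> * real (card X)" unfolding price_def by (simp add: sum.distrib)
    also have "\<epsilon> * real (card X) \<le> \<epsilon> * real (card \<Omega>)" using card_mono[OF finite_items X] \<epsilon> by simp
    finally have "price (personal_price \<epsilon> H b p) X \<le> price p X + \<delta>" using \<epsilon>(2) by simp
    moreover have "price (personal_price \<epsilon> H b p) (H b) = price p (H b)"
      by (rule price_cong) (simp add: personal_price_def)
    moreover have "v b X - price (personal_price \<epsilon> H b p) X
        \<le> v b (H b) - price (personal_price \<epsilon> H b p) (H b)"
      using content b X unfolding demand_def by blast
    ultimately show ?thesis by linarith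
  qed
  then show ?thesis using state unfolding auction_state_def approx_walrasian_def by blast
qed

lemma walrasian_limit:
  assumes approx: "\<And>k. approx_walrasian c (\<delta> k) (P k) H" and "\<delta> \<longlonglongrightarrow> 0"
    and lim: "\<And>j. j \<in> \<Omega> \<Longrightarrow> (\<lambda>k. P k j) \<longlonglongrightarrow> q j"
  shows "walrasian c q H"
proof -
  have price_lim: "(\<lambda>k. price (P k) X) \<longlonglongrightarrow> price q X" if "X \<subseteq> \<Omega>" for X
    unfolding price_def using that lim by (intro tendsto_sum) auto
  have H: "is_alloc B \<Omega> H" using approx by (simp add: approx_walrasian_def)
  have "c j \<le> q j" if j: "j \<in> \<Omega>" for j
  proof (rule LIMSEQ_le_const[OF lim[OF j]])
    show "\<exists>N. \<forall>k\<ge>N. c j \<le> P k j" using approx j unfolding approx_walrasian_def by blast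
  qed
  moreover have "q j = c j" if j: "j \<in> \<Omega> - (\<Union>b\<in>B. H b)" for j
  proof -
    have "P k j = c j" for k using approx[of k] j unfolding approx_walrasian_def by blast
    then show ?thesis using lim[of j] j LIMSEQ_unique[of "\<lambda>k. P k j" "q j" "c j"] by simp
  qed
  moreover have "H b \<in> demand \<Omega> (v b) q" if b: "b \<in> B" for b
  proof -
    have HO: "H b \<subseteq> \<Omega>" using H b by (simp add: is_alloc_def)
    have "0 \<le> (v b (H b) - price q (H b)) - (v b X - price q X) + 0" if X: "X \<subseteq> \<Omega>" for X
    proof (rule LIMSEQ_le_const)
      show "(\<lambda>k. (v b (H b) - price (P k) (H b)) - (v b X - price (P k) X) + \<delta> k)
          \<longlonglongrightarrow> (v b (H b) - price q (H b)) - (v b X - price q X) + 0"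
        by (intro tendsto_add tendsto_diff tendsto_const price_lim HO X assms(2))
      have "v b X - price (P k) X - \<delta> k \<le> v b (H b) - price (P k) (H b)" for k
        using approx[of k] b X unfolding approx_walrasian_def by blast
      then have "0 \<le> (v b (H b) - price (P k) (H b)) - (v b X - price (P k) X) + \<delta> k" for k
        by (smt (verit))
      then show "\<exists>N. \<forall>k\<ge>N. 0 \<le> (v b (H b) - price (P k) (H b)) - (v b X - price (P k) X) + \<delta> k"
        by blast
    qed
    then show ?thesis using HO unfolding demand_def by auto
  qed
  ultimately show ?thesis using H unfolding walrasian_def by blast
qed

lemma approx_walrasian_common_alloc:
  assumes approx: "\<And>n. approx_walrasian c (\<delta> n) (P n) (Hs n)"
  obtains r :: "nat \<Rightarrow> nat" and H where "strict_mono r" "\<And>k. approx_walrasian c (\<delta> (r k)) (P (r k)) H"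
proof -
  have "Hs n b \<subseteq> \<Omega>" if "b \<in> B" for n b
    using approx[of n] that unfolding approx_walrasian_def is_alloc_def by blast
  then have "restrict (Hs n) B \<in> (\<Pi>\<^sub>E b\<in>B. Pow \<Omega>)" for n by (simp add: PiE_iff)
  then have "range (\<lambda>n. restrict (Hs n) B) \<subseteq> (\<Pi>\<^sub>E b\<in>B. Pow \<Omega>)" by blast
  then have "finite (range (\<lambda>n. restrict (Hs n) B))"
    by (rule finite_subset) (simp add: finite_PiE finite_bidders finite_items)
  then obtain r :: "nat \<Rightarrow> nat" where r: "strict_mono r" "\<And>k. restrict (Hs (r k)) B = restrict (Hs (r 0)) B"
    by (rule finite_range_constant_subseq) blast
  have "approx_walrasian c (\<delta> (r k)) (P (r k)) (Hs (r 0))" for k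
    using approx[of "r k"] approx_walrasian_cong[of "Hs (r k)" "Hs (r 0)"] r(2)[of k]
    by (metis restrict_apply')
  with r(1) show ?thesis by (rule that)
qed

lemma walrasian_exists:
  assumes c: "\<And>j. j \<in> \<Omega> \<Longrightarrow> 0 \<le> c j"
  shows "\<exists>q X. walrasian c q X"
proof -
  define \<delta> :: "nat \<Rightarrow> real" where "\<delta> n = inverse (real (Suc n))" for n
  have "\<forall>n. \<exists>p H. approx_walrasian c (\<delta> n) p H"
    using approx_walrasian_exists[of c, OF c] unfolding \<delta>_def by simp
  then obtain P Hs where "\<And>n. approx_walrasian c (\<delta> n) (P n) (Hs n)" by metis
  then obtain r :: "nat \<Rightarrow> nat" and H
    where r: "strict_mono r" and approx: "\<And>k. approx_walrasian c (\<delta> (r k)) (P (r k)) H"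
    using approx_walrasian_common_alloc[of c \<delta> P Hs] by blast
  obtain s :: "nat \<Rightarrow> nat" where s: "strict_mono s" "\<forall>j\<in>\<Omega>. convergent (\<lambda>k. P (r (s k)) j)"
    using bounded_coordinates_convergent_subseq[OF finite_items, where lo=c and hi="\<lambda>j. c j + value_bound"
        and s="\<lambda>k. P (r k)"] approx unfolding approx_walrasian_def by blast
  define q where "q j = lim (\<lambda>k. P (r (s k)) j)" for j
  have "walrasian c q H"
  proof (rule walrasian_limit)
    show "approx_walrasian c (\<delta> (r (s k))) (P (r (s k))) H" for k by (rule approx)
    have "\<delta> \<longlonglongrightarrow> 0" unfolding \<delta>_def by (rule LIMSEQ_inverse_real_of_nat)
    then show "(\<lambda>k. \<delta> (r (s k))) \<longlonglongrightarrow> 0"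
      using LIMSEQ_subseq_LIMSEQ[OF _ strict_mono_o[OF r s(1)]] by (simp add: comp_def)
    show "(\<lambda>k. P (r (s k)) j) \<longlonglongrightarrow> q j" if "j \<in> \<Omega>" for j
      using s(2) that unfolding q_def by (simp add: convergent_LIMSEQ_iff)
  qed
  then show ?thesis by blast
qed

end

section \<open>Welfare theorems and restricted markets\<close>

locale gs_market_reserve = gs_market +
  fixes r :: "'a \<Rightarrow> real"
  assumes reserve_nonneg: "\<And>j. j \<in> \<Omega> \<Longrightarrow> 0 \<le> r j"
begin

lemma price_reserve_mono: "X \<subseteq> Y \<Longrightarrow> Y \<subseteq> \<Omega> \<Longrightarrow> price r X \<le> price r Y"
  using finite_subset[OF _ finite_items] reserve_nonneg by (intro price_mono_subset) auto

lemma welfare_reserve: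
  assumes "is_alloc B T X" "T \<subseteq> \<Omega>"
  shows "welfare r X = (\<Sum>b\<in>B. v b (X b)) + price r \<Omega> - price r (\<Union>b\<in>B. X b)"
  using price_Diff[OF finite_items, of "\<Union>b\<in>B. X b" r] is_alloc_Union_subset[OF assms(1)] assms(2)
  unfolding welfare_def by auto

lemma walrasian_OR_demand:
  assumes W: "walrasian r q X"
  shows "(\<Union>b\<in>B. X b) \<in> OR_demand \<Omega> v B r" and "OR_optimal v B (\<Union>b\<in>B. X b) X"
proof -
  let ?U = "\<Union>b\<in>B. X b"
  have X: "is_alloc B \<Omega> X" and rq: "\<And>j. j \<in> \<Omega> \<Longrightarrow> r j \<le> q j"
    using W by (auto simp: walrasian_def)
  have UO: "?U \<subseteq> \<Omega>" by (rule is_alloc_Union_subset[OF X])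
  have finU: "finite ?U" using UO finite_items by (rule finite_subset)
  have surplus: "v_OR v B T - price r T \<le> (\<Sum>b\<in>B. v b (X b)) - price r ?U" if T: "T \<subseteq> \<Omega>" for T
  proof -
    obtain Y where Y: "is_alloc B T Y" "(\<Sum>b\<in>B. v b (Y b)) = v_OR v B T"
      using OR_optimal_exists[OF finite_bidders finite_subset[OF T finite_items]]
      unfolding OR_optimal_def by blast
    have "welfare r Y \<le> lyapunov q"
      using is_alloc_mono[OF Y(1) T] rq by (rule welfare_le_lyapunov)
    moreover have "price r (\<Union>b\<in>B. Y b) \<le> price r T"
      using is_alloc_Union_subset[OF Y(1)] T by (rule price_reserve_mono)
    ultimately show ?thesis
      using lyapunov_eq_welfare[OF W] welfare_reserve[OF Y(1) T] welfare_reserve[OF X order.refl] Y(2)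
      by linarith
  qed
  have "(\<Sum>b\<in>B. v b (X b)) \<le> v_OR v B ?U"
    using finite_bidders finU is_alloc_Union[OF X] by (rule v_OR_ge)
  then have "(\<Sum>b\<in>B. v b (X b)) = v_OR v B ?U" using surplus[OF UO] by linarith
  then show "OR_optimal v B ?U X" using is_alloc_Union[OF X] by (simp add: OR_optimal_def)
  show "?U \<in> OR_demand \<Omega> v B r"
    using surplus UO \<open>(\<Sum>b\<in>B. v b (X b)) = v_OR v B ?U\<close> by (simp add: OR_demand_iff)
qed

lemma walrasian_OR_demand_allocated_set:
  assumes W: "walrasian r q X" and X: "is_alloc B T X" and T: "T \<subseteq> \<Omega>"
    and unallocated: "price r (T - (\<Union>b\<in>B. X b)) = 0"
  shows "T \<in> OR_demand \<Omega> v B r" and "OR_optimal v B T X"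
proof -
  let ?U = "\<Union>b\<in>B. X b"
  note U_opt = walrasian_OR_demand[OF W]
  have UT: "?U \<subseteq> T" by (rule is_alloc_Union_subset[OF X])
  have finT: "finite T" using T finite_items by (rule finite_subset)
  have mono: "v_OR v B ?U \<le> v_OR v B T" by (rule v_OR_mono[OF finite_bidders finT UT])
  have U_dem: "v_OR v B T' - price r T' \<le> v_OR v B ?U - price r ?U" if "T' \<subseteq> \<Omega>" for T'
    using U_opt(1) that by (simp add: OR_demand_iff)
  have reserve_eq: "price r T = price r ?U" using price_Diff[OF finT UT, of r] unallocated by simp
  have "(\<Sum>b\<in>B. v b (X b)) = v_OR v B ?U" using U_opt(2) by (simp add: OR_optimal_def)
  then have "(\<Sum>b\<in>B. v b (X b)) = v_OR v B T" using mono U_dem[OF T] reserve_eq by linarith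
  then show "OR_optimal v B T X" using X by (simp add: OR_optimal_def)
  have "v_OR v B T' - price r T' \<le> v_OR v B T - price r T" if "T' \<subseteq> \<Omega>" for T'
    using U_dem[OF that] mono reserve_eq by linarith
  then show "T \<in> OR_demand \<Omega> v B r" using T by (simp add: OR_demand_iff)
qed

lemma OR_optimal_unallocated_reserve:
  assumes S: "S \<in> OR_demand \<Omega> v B r" and A: "OR_optimal v B S A"
  shows "price r (S - (\<Union>b\<in>B. A b)) = 0"
proof -
  have SO: "S \<subseteq> \<Omega>" using S by (simp add: OR_demand_iff)
  have Aal: "is_alloc B S A" and Av: "(\<Sum>b\<in>B. v b (A b)) = v_OR v B S"
    using A by (auto simp: OR_optimal_def)
  have US: "(\<Union>b\<in>B. A b) \<subseteq> S" by (rule is_alloc_Union_subset[OF Aal])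
  have finS: "finite S" using SO finite_items by (rule finite_subset)
  have "v_OR v B S \<le> v_OR v B (\<Union>b\<in>B. A b)"
    using v_OR_ge[OF finite_bidders finite_subset[OF US finS] is_alloc_Union[OF Aal], of v] Av by simp
  moreover have "v_OR v B (\<Union>b\<in>B. A b) - price r (\<Union>b\<in>B. A b) \<le> v_OR v B S - price r S"
    using S US SO unfolding OR_demand_iff by blast
  moreover have "price r S = price r (\<Union>b\<in>B. A b) + price r (S - (\<Union>b\<in>B. A b))"
    by (rule price_Diff[OF finS US])
  moreover have "0 \<le> price r (S - (\<Union>b\<in>B. A b))" using reserve_nonneg SO by (intro price_nonneg) auto
  ultimately show ?thesis by linarith
qed

lemma OR_optimal_walrasian:
  assumes S: "S \<in> OR_demand \<Omega> v B r" and A: "OR_optimal v B S A" and W: "walrasian r q X"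
  shows "walrasian r q A"
proof (rule walrasian_if_lyapunov_le_welfare)
  have SO: "S \<subseteq> \<Omega>" using S by (simp add: OR_demand_iff)
  have Aal: "is_alloc B S A" and Av: "(\<Sum>b\<in>B. v b (A b)) = v_OR v B S"
    using A by (auto simp: OR_optimal_def)
  have X: "is_alloc B \<Omega> X" using W by (simp add: walrasian_def)
  show "\<And>j. j \<in> \<Omega> \<Longrightarrow> r j \<le> q j" using W by (simp add: walrasian_def)
  show "is_alloc B \<Omega> A" using Aal SO by (rule is_alloc_mono)
  have "v_OR v B (\<Union>b\<in>B. X b) - price r (\<Union>b\<in>B. X b) \<le> v_OR v B S - price r S"
    using S is_alloc_Union_subset[OF X] unfolding OR_demand_iff by blast
  moreover have "price r (\<Union>b\<in>B. A b) \<le> price r S"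
    using is_alloc_Union_subset[OF Aal] SO by (rule price_reserve_mono)
  moreover have "(\<Sum>b\<in>B. v b (X b)) = v_OR v B (\<Union>b\<in>B. X b)"
    using walrasian_OR_demand(2)[OF W] by (simp add: OR_optimal_def)
  ultimately show "lyapunov q \<le> welfare r A"
    using lyapunov_eq_welfare[OF W] welfare_reserve[OF X order.refl] welfare_reserve[OF Aal SO] Av
    by linarith
qed

definition prohibitive_price :: real where
  "prohibitive_price = 1 + value_bound + price r \<Omega>"

text \<open>Pricing the items outside \<open>S\<close> prohibitively restricts the market to \<open>S\<close>.\<close>

definition prohibit_outside :: "'a set \<Rightarrow> ('a \<Rightarrow> real) \<Rightarrow> 'a \<Rightarrow> real" where
  "prohibit_outside S p j = (if j \<in> S then p j else prohibitive_price)"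

lemma prohibitive_price_nonneg: "0 \<le> prohibitive_price"
  using value_bound_nonneg price_nonneg[of \<Omega> r] reserve_nonneg unfolding prohibitive_price_def by force

lemma valuation_lt_prohibitive_price: "b \<in> B \<Longrightarrow> v b \<Omega> < prohibitive_price"
  using value_bound_ge[of b] price_nonneg[of \<Omega> r] reserve_nonneg unfolding prohibitive_price_def by force

lemma reserve_le_prohibitive_price: "j \<in> \<Omega> \<Longrightarrow> r j \<le> prohibitive_price"
  using member_le_sum[of j \<Omega> r] reserve_nonneg finite_items value_bound_nonneg
  unfolding prohibitive_price_def price_def by force

lemma price_prohibit_outside: "U \<subseteq> S \<Longrightarrow> price (prohibit_outside S p) U = price p U"
  unfolding prohibit_outside_def by (rule price_cong) auto

lemma reserve_le_prohibit_outside: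
  "(\<And>j. j \<in> S \<Longrightarrow> r j \<le> p j) \<Longrightarrow> j \<in> \<Omega> \<Longrightarrow> r j \<le> prohibit_outside S p j"
  unfolding prohibit_outside_def using reserve_le_prohibitive_price by auto

lemma prohibit_outside_reserve_nonneg: "j \<in> \<Omega> \<Longrightarrow> 0 \<le> prohibit_outside S r j"
  using reserve_nonneg prohibitive_price_nonneg unfolding prohibit_outside_def by simp

lemma demand_subset_if_prohibitive:
  assumes b: "b \<in> B" and high: "\<And>j. j \<in> \<Omega> - S \<Longrightarrow> prohibitive_price \<le> q j"
    and X: "X \<in> demand \<Omega> (v b) q"
  shows "X \<subseteq> S"
proof
  fix j assume j: "j \<in> X"
  have "j \<in> \<Omega>" using X j by (auto simp: demand_def)
  moreover have "q j < prohibitive_price"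
    using demanded_item_price_le[OF b X j] valuation_lt_prohibitive_price[OF b] by linarith
  ultimately show "j \<in> S" using high by force
qed

lemma utility_prohibit_outside_le:
  assumes b: "b \<in> B" and T: "T \<subseteq> \<Omega>"
  shows "v b T - price (prohibit_outside S p) T \<le> v b (T \<inter> S) - price p (T \<inter> S)"
proof (cases "T \<subseteq> S")
  case True
  then show ?thesis using price_prohibit_outside[OF True] by (simp add: Int_absorb2)
next
  case False
  then have "T - S \<noteq> {}" by blast
  moreover have finT: "finite T" using T finite_items by (rule finite_subset)
  ultimately have "1 \<le> real (card (T - S))" by (simp add: Suc_le_eq card_gt_0_iff)
  moreover have "price (prohibit_outside S p) (T - S) = real (card (T - S)) * prohibitive_price"
    unfolding price_def prohibit_outside_def by simp
  ultimately have "prohibitive_price \<le> price (prohibit_outside S p) (T - S)"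
    using mult_right_mono[OF _ prohibitive_price_nonneg, of 1] by simp
  moreover have "price (prohibit_outside S p) T = price p (T \<inter> S) + price (prohibit_outside S p) (T - S)"
  proof -
    have "T - T \<inter> S = T - S" by blast
    then show ?thesis
      using price_Diff[OF finT Int_lower1[of T S], of "prohibit_outside S p"] price_prohibit_outside[of "T \<inter> S" S p]
      by (simp only: Int_lower2)
  qed
  moreover have "v b T \<le> v b \<Omega>" "0 \<le> v b (T \<inter> S)"
    using valuation_mono[OF b T order.refl] valuation_nonneg[OF b, of "T \<inter> S"] T by auto
  ultimately show ?thesis using valuation_lt_prohibitive_price[OF b] by linarith
qed

lemma demand_prohibit_outside_iff:
  assumes "S \<subseteq> \<Omega>" and b: "b \<in> B" and "X \<subseteq> S"
  shows "X \<in> demand \<Omega> (v b) (prohibit_outside S p) \<longleftrightarrow>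
    (\<forall>U. U \<subseteq> S \<longrightarrow> v b U - price p U \<le> v b X - price p X)"
proof
  assume X: "X \<in> demand \<Omega> (v b) (prohibit_outside S p)"
  show "\<forall>U. U \<subseteq> S \<longrightarrow> v b U - price p U \<le> v b X - price p X"
  proof (intro allI impI)
    fix U assume U: "U \<subseteq> S"
    then have "v b U - price (prohibit_outside S p) U \<le> v b X - price (prohibit_outside S p) X"
      using X assms(1) unfolding demand_def by blast
    then show "v b U - price p U \<le> v b X - price p X"
      by (simp add: price_prohibit_outside[OF U] price_prohibit_outside[OF assms(3)])
  qed
next
  assume best: "\<forall>U. U \<subseteq> S \<longrightarrow> v b U - price p U \<le> v b X - price p X"
  have "v b T - price (prohibit_outside S p) T \<le> v b X - price p X" if "T \<subseteq> \<Omega>" for T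
    using utility_prohibit_outside_le[OF b that, of S p] best[rule_format, of "T \<inter> S"] by auto
  moreover have "X \<subseteq> \<Omega>" using assms(1,3) by (rule order.trans[rotated])
  ultimately show "X \<in> demand \<Omega> (v b) (prohibit_outside S p)"
    by (simp add: demand_def price_prohibit_outside[OF assms(3)])
qed

lemma envy_free_iff_demand_prohibit_outside:
  assumes "S \<subseteq> \<Omega>"
  shows "envy_free v B S p A \<longleftrightarrow> is_alloc B S A \<and> (\<forall>b\<in>B. A b \<in> demand \<Omega> (v b) (prohibit_outside S p))"
proof -
  have "(\<forall>b\<in>B. A b \<in> demand \<Omega> (v b) (prohibit_outside S p)) \<longleftrightarrow>
      (\<forall>b\<in>B. \<forall>U. U \<subseteq> S \<longrightarrow> v b U - price p U \<le> v b (A b) - price p (A b))" if "is_alloc B S A"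
    using that by (intro ball_cong refl demand_prohibit_outside_iff[OF assms]) (simp_all add: is_alloc_def)
  then show ?thesis unfolding envy_free_def by blast
qed

lemma walrasian_prohibit_outside:
  assumes W: "walrasian r q A" and "(\<Union>b\<in>B. A b) \<subseteq> S" "S \<subseteq> \<Omega>"
  shows "walrasian (prohibit_outside S r) (prohibit_outside S q) A"
proof -
  have "\<forall>j\<in>\<Omega> - (\<Union>b\<in>B. A b). q j = r j" using W by (simp add: walrasian_def)
  then have unsold: "q j = r j" if "j \<in> \<Omega> - S" for j using that assms(2) by blast
  have "A b \<in> demand \<Omega> (v b) (prohibit_outside S q)" if b: "b \<in> B" for b
  proof (rule demand_raise_unbought)
    show "A b \<in> demand \<Omega> (v b) q" using W b by (simp add: walrasian_def)
    show "q j \<le> prohibit_outside S q j" if "j \<in> \<Omega>" for j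
      using unsold[of j] reserve_le_prohibitive_price[of j] that unfolding prohibit_outside_def by auto
    show "q j = prohibit_outside S q j" if "j \<in> A b" for j
    proof -
      have "j \<in> S" using that b assms(2) by blast
      then show ?thesis by (simp add: prohibit_outside_def)
    qed
  qed
  moreover have "prohibit_outside S r j \<le> prohibit_outside S q j" if "j \<in> \<Omega>" for j
    using W that unfolding walrasian_def prohibit_outside_def by auto
  moreover have "prohibit_outside S q j = prohibit_outside S r j" if "j \<in> \<Omega> - (\<Union>b\<in>B. A b)" for j
    using W that unfolding walrasian_def prohibit_outside_def by auto
  ultimately show ?thesis using W unfolding walrasian_def by blast
qed

end

section \<open>The EF-mediator\<close>

locale gs_mediator = gs_market_reserve +
  fixes pS :: "'a set \<Rightarrow> 'a \<Rightarrow> real" and AS :: "'a set \<Rightarrow> 'b \<Rightarrow> 'a set"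
  assumes virtual_auction: "virtual_auction \<Omega> v B r pS AS"
begin

context
  fixes S assumes S: "S \<subseteq> \<Omega>"
begin

lemma virtual_auction_at: "minimal_ef_price \<Omega> v B S r (pS S) \<and> va_alloc v B S (pS S) (AS S)"
  using virtual_auction S unfolding virtual_auction_def by blast

lemma virtual_auction_envy_free: "envy_free v B S (pS S) (AS S)"
  using virtual_auction_at by (simp add: va_alloc_def)

lemma virtual_auction_is_alloc: "is_alloc B S (AS S)"
  using virtual_auction_envy_free by (simp add: envy_free_def)

lemma virtual_auction_price_ge_reserve: "j \<in> \<Omega> \<Longrightarrow> r j \<le> pS S j"
  using virtual_auction_at by (simp add: minimal_ef_price_def ef_price_def)

lemma virtual_auction_price_nonneg: "j \<in> \<Omega> \<Longrightarrow> 0 \<le> pS S j"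
  using virtual_auction_price_ge_reserve[of j] reserve_nonneg[of j] by linarith

lemma virtual_auction_price_outside: "j \<in> \<Omega> - S \<Longrightarrow> pS S j = r j"
  using virtual_auction_at by (simp add: minimal_ef_price_def)

lemma virtual_auction_price_minimal:
  assumes "ef_price \<Omega> v B S r q" "\<And>j. j \<in> \<Omega> \<Longrightarrow> q j \<le> pS S j" "j \<in> \<Omega>"
  shows "q j = pS S j"
proof (rule ccontr)
  assume "q j \<noteq> pS S j"
  then have "q j < pS S j" using assms(2,3) by force
  then show False using virtual_auction_at assms unfolding minimal_ef_price_def by blast
qed

lemma virtual_auction_alloc_max:
  "envy_free v B S (pS S) A \<Longrightarrow> (\<Sum>b\<in>B. price (pS S) (A b)) \<le> (\<Sum>b\<in>B. price (pS S) (AS S b))"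
  using virtual_auction_at unfolding va_alloc_def by blast

lemma envy_free_sold_price_le:
  assumes "envy_free v B S (pS S) A"
  shows "(\<Sum>b\<in>B. price (pS S) (A b)) \<le> price (pS S) S"
proof -
  have A: "is_alloc B S A" using assms by (simp add: envy_free_def)
  have "0 \<le> price (pS S) (S - (\<Union>b\<in>B. A b))"
    using S virtual_auction_price_nonneg by (intro price_nonneg) auto
  then show ?thesis
    using price_alloc_unsold[OF finite_bidders finite_subset[OF S finite_items] A, of "pS S"] by linarith
qed

text \<open>The virtual auction's prices for \<open>S\<close> are the least Walrasian prices of the market restricted
  to \<open>S\<close>, i.e.\ with reserve prices \<open>r\<close> on \<open>S\<close> and prohibitive ones outside.\<close>

lemma virtual_auction_walrasian_restricted:
  "walrasian (\<lambda>j. if j \<in> S - (\<Union>b\<in>B. AS S b) then pS S j else prohibit_outside S r j)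
     (prohibit_outside S (pS S)) (AS S)"
proof -
  have "\<forall>b\<in>B. AS S b \<in> demand \<Omega> (v b) (prohibit_outside S (pS S))"
    using virtual_auction_envy_free envy_free_iff_demand_prohibit_outside[OF S] by blast
  then show ?thesis
    using is_alloc_mono[OF virtual_auction_is_alloc S] virtual_auction_price_ge_reserve
      reserve_le_prohibitive_price
    unfolding walrasian_def prohibit_outside_def by auto
qed

lemma walrasian_restricted_below_virtual_auction_price:
  assumes W: "walrasian (prohibit_outside S r) m X"
    and le: "\<And>j. j \<in> \<Omega> \<Longrightarrow> m j \<le> prohibit_outside S (pS S) j" and j: "j \<in> \<Omega>"
  shows "m j = prohibit_outside S (pS S) j"
proof -
  have m_ge: "prohibit_outside S r j \<le> m j" if "j \<in> \<Omega>" for j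
    using W that unfolding walrasian_def by blast
  have outside: "m j = prohibitive_price" if "j \<in> \<Omega> - S" for j
    using m_ge[of j] le[of j] that unfolding prohibit_outside_def by simp
  define m' where "m' j = (if j \<in> S then m j else r j)" for j
  have m_eq: "m j = prohibit_outside S m' j" if "j \<in> \<Omega>" for j
    using outside[of j] that unfolding m'_def prohibit_outside_def by simp
  have X_demand: "X b \<in> demand \<Omega> (v b) m" if "b \<in> B" for b
    using W that unfolding walrasian_def by blast
  have X: "is_alloc B S X"
  proof -
    have "X b \<subseteq> S" if "b \<in> B" for b
      by (rule demand_subset_if_prohibitive[OF that _ X_demand[OF that]]) (use outside in force)
    then show ?thesis using W unfolding walrasian_def is_alloc_def by blast
  qed
  have "ef_price \<Omega> v B S r m'"
    unfolding ef_price_def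
  proof (intro conjI exI ballI)
    show "r j \<le> m' j" if "j \<in> \<Omega>" for j
      using m_ge[OF that] unfolding m'_def prohibit_outside_def by (simp split: if_splits)
    have "\<forall>b\<in>B. X b \<in> demand \<Omega> (v b) (prohibit_outside S m')"
      using X_demand demand_cong[of \<Omega> m "prohibit_outside S m'"] m_eq by blast
    then show "envy_free v B S m' X" using X envy_free_iff_demand_prohibit_outside[OF S] by blast
  qed
  moreover have "m' j \<le> pS S j" if "j \<in> \<Omega>" for j
    using le[OF that] virtual_auction_price_outside[of j] that unfolding m'_def prohibit_outside_def by auto
  ultimately have "m' j = pS S j" using j by (rule virtual_auction_price_minimal)
  then show ?thesis using m_eq[OF j] unfolding prohibit_outside_def by simp
qed

lemma virtual_auction_price_least_walrasian:
  assumes W: "walrasian (prohibit_outside S r) q X"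
  shows "walrasian (prohibit_outside S r) (prohibit_outside S (pS S)) X"
    and "\<And>j. j \<in> \<Omega> \<Longrightarrow> prohibit_outside S (pS S) j \<le> q j"
proof -
  define m where "m j = min (q j) (prohibit_outside S (pS S) j)" for j
  have c_le: "prohibit_outside S r j \<le> (if j \<in> S - (\<Union>b\<in>B. AS S b) then pS S j else prohibit_outside S r j)"
    if "j \<in> \<Omega>" for j
    using virtual_auction_price_ge_reserve[OF that] unfolding prohibit_outside_def by simp
  have Wm: "walrasian (prohibit_outside S r) m X"
    unfolding m_def using prohibit_outside_reserve_nonneg c_le W virtual_auction_walrasian_restricted
    by (rule walrasian_min)
  have m_p: "m j = prohibit_outside S (pS S) j" if "j \<in> \<Omega>" for j
    by (rule walrasian_restricted_below_virtual_auction_price[OF Wm _ that]) (simp add: m_def)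
  show "walrasian (prohibit_outside S r) (prohibit_outside S (pS S)) X" using walrasian_cong[OF Wm m_p] by blast
  show "prohibit_outside S (pS S) j \<le> q j" if "j \<in> \<Omega>" for j using m_p[OF that] unfolding m_def by simp
qed

end

definition min_walrasian_price :: "'a \<Rightarrow> real" where
  "min_walrasian_price = pS \<Omega>"

lemma min_walrasian_price_least:
  assumes "walrasian r q X"
  shows "walrasian r min_walrasian_price X" and "\<And>j. j \<in> \<Omega> \<Longrightarrow> min_walrasian_price j \<le> q j"
proof -
  have items: "prohibit_outside \<Omega> p j = p j" if "j \<in> \<Omega>" for p j
    using that by (simp add: prohibit_outside_def)
  have "walrasian (prohibit_outside \<Omega> r) q X"
    by (rule walrasian_cong[OF assms]) (simp_all add: items)
  from virtual_auction_price_least_walrasian[OF order.refl this]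
  show "walrasian r min_walrasian_price X" and "\<And>j. j \<in> \<Omega> \<Longrightarrow> min_walrasian_price j \<le> q j"
    unfolding min_walrasian_price_def using items by (auto elim: walrasian_cong)
qed

lemma min_walrasian_price_walrasian: "\<exists>X. walrasian r min_walrasian_price X"
  using walrasian_exists[of r, OF reserve_nonneg] min_walrasian_price_least(1) by blast

lemma reserve_le_min_walrasian_price: "j \<in> \<Omega> \<Longrightarrow> r j \<le> min_walrasian_price j"
  using virtual_auction_price_ge_reserve[OF order.refl] unfolding min_walrasian_price_def .

definition walrasian_revenue :: real where
  "walrasian_revenue = price min_walrasian_price \<Omega> - price r \<Omega>"

lemma walrasian_revenue_nonneg: "0 \<le> walrasian_revenue"
  using reserve_le_min_walrasian_price unfolding walrasian_revenue_def by (simp add: price_mono)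

context
  fixes S A
  assumes S: "S \<in> OR_demand \<Omega> v B r" and A: "OR_optimal v B S A"
begin

lemma OR_demand_subset: "S \<subseteq> \<Omega>"
  using S by (simp add: OR_demand_iff)

lemma OR_optimal_is_alloc: "is_alloc B S A"
  using A by (simp add: OR_optimal_def)

lemma OR_demand_virtual_auction_price:
  shows "walrasian r (pS S) A" and "\<And>j. j \<in> \<Omega> \<Longrightarrow> pS S j = min_walrasian_price j"
proof -
  let ?p = "pS S" and ?p' = min_walrasian_price
  have SO: "S \<subseteq> \<Omega>" by (rule OR_demand_subset)
  have US: "(\<Union>b\<in>B. A b) \<subseteq> S" by (rule is_alloc_Union_subset[OF OR_optimal_is_alloc])
  obtain X where "walrasian r ?p' X" using min_walrasian_price_walrasian by blast
  with S A have WA: "walrasian r ?p' A" by (rule OR_optimal_walrasian)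
  have outside: "?p' j = r j" "?p j = r j" if "j \<in> \<Omega> - S" for j
    using WA US that virtual_auction_price_outside[OF SO that] unfolding walrasian_def by blast+
  have W: "walrasian (prohibit_outside S r) (prohibit_outside S ?p') A"
    using WA US SO by (rule walrasian_prohibit_outside)
  have WS: "walrasian (prohibit_outside S r) (prohibit_outside S ?p) A"
    and le: "\<And>j. j \<in> \<Omega> \<Longrightarrow> prohibit_outside S ?p j \<le> prohibit_outside S ?p' j"
    using virtual_auction_price_least_walrasian[OF SO W] by blast+
  have le_S: "?p j \<le> ?p' j" if "j \<in> \<Omega>" for j
    using le[OF that] outside[of j] that unfolding prohibit_outside_def by (auto split: if_splits)
  have "r j \<le> prohibit_outside S r j" if "j \<in> \<Omega>" for j
    by (rule reserve_le_prohibit_outside[of S r, OF _ that]) simp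
  then have "walrasian r (\<lambda>j. min (?p' j) (prohibit_outside S ?p j)) A"
    using reserve_nonneg WA WS by (intro walrasian_min)
  moreover have "min (?p' j) (prohibit_outside S ?p j) = ?p j" if "j \<in> \<Omega>" for j
    using le_S[OF that] outside[of j] reserve_le_prohibitive_price[OF that] that
    unfolding prohibit_outside_def by auto
  ultimately show W_p: "walrasian r ?p A" by (rule walrasian_cong) simp_all
  show "?p j = ?p' j" if "j \<in> \<Omega>" for j
    using le_S[OF that] min_walrasian_price_least(2)[OF W_p that] by linarith
qed

lemma OR_optimal_sold_price: "(\<Sum>b\<in>B. price (pS S) (A b)) = price (pS S) S"
proof -
  have SO: "S \<subseteq> \<Omega>" by (rule OR_demand_subset)
  have "price (pS S) (S - (\<Union>b\<in>B. A b)) = price r (S - (\<Union>b\<in>B. A b))"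
    using OR_demand_virtual_auction_price(1) SO unfolding walrasian_def by (intro price_cong) auto
  also have "\<dots> = 0" using S A by (rule OR_optimal_unallocated_reserve)
  finally show ?thesis
    using price_alloc_unsold[OF finite_bidders finite_subset[OF SO finite_items] OR_optimal_is_alloc]
    by simp
qed

end

lemma OR_demand_virtual_auction_demand:
  assumes S: "S \<in> OR_demand \<Omega> v B r" and b: "b \<in> B"
  shows "AS S b \<in> demand \<Omega> (v b) (pS S)"
proof -
  have SO: "S \<subseteq> \<Omega>" using S by (simp add: OR_demand_iff)
  obtain A where A: "OR_optimal v B S A"
    using OR_optimal_exists[OF finite_bidders finite_subset[OF SO finite_items]] by blast
  have "A b \<in> demand \<Omega> (v b) (pS S)"
    using OR_demand_virtual_auction_price(1)[OF S A] b by (simp add: walrasian_def)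
  then have "v b (A b) - price (pS S) (A b) = indirect_utility \<Omega> (v b) (pS S)"
    by (simp add: demand_iff_indirect_utility[OF finite_items])
  moreover have "A b \<subseteq> S" "AS S b \<subseteq> S"
    using OR_optimal_is_alloc[OF S A] virtual_auction_is_alloc[OF SO] b by (auto simp: is_alloc_def)
  moreover have "v b (A b) - price (pS S) (A b) \<le> v b (AS S b) - price (pS S) (AS S b)"
    using virtual_auction_envy_free[OF SO] b calculation(2) by (simp add: envy_free_def)
  moreover have "v b (AS S b) - price (pS S) (AS S b) \<le> indirect_utility \<Omega> (v b) (pS S)"
    using finite_items calculation(3) SO by (intro max_utility_ge) auto
  ultimately show ?thesis using SO by (simp add: demand_iff_indirect_utility[OF finite_items])
qed

lemma OR_demand_virtual_auction_sold_price:
  assumes S: "S \<in> OR_demand \<Omega> v B r"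
  shows "(\<Sum>b\<in>B. price (pS S) (AS S b)) = price (pS S) S"
proof -
  have SO: "S \<subseteq> \<Omega>" using S by (simp add: OR_demand_iff)
  obtain A where A: "OR_optimal v B S A"
    using OR_optimal_exists[OF finite_bidders finite_subset[OF SO finite_items]] by blast
  have "envy_free v B S (pS S) A"
    by (rule envy_free_if_demand[OF OR_optimal_is_alloc[OF S A] SO])
      (use OR_demand_virtual_auction_price(1)[OF S A] in \<open>simp add: walrasian_def\<close>)
  then have "price (pS S) S \<le> (\<Sum>b\<in>B. price (pS S) (AS S b))"
    using virtual_auction_alloc_max[OF SO] OR_optimal_sold_price[OF S A] by metis
  moreover have "(\<Sum>b\<in>B. price (pS S) (AS S b)) \<le> price (pS S) S"
    using SO virtual_auction_envy_free[OF SO] by (rule envy_free_sold_price_le)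
  ultimately show ?thesis by linarith
qed

lemma OR_demand_mediator_revenue:
  assumes S: "S \<in> OR_demand \<Omega> v B r"
  shows "mediator_revenue \<Omega> v B r (pS S) (AS S) S = walrasian_revenue"
proof -
  have SO: "S \<subseteq> \<Omega>" using S by (simp add: OR_demand_iff)
  obtain A where A: "OR_optimal v B S A"
    using OR_optimal_exists[OF finite_bidders finite_subset[OF SO finite_items]] by blast
  note eq = OR_demand_virtual_auction_price(2)[OF S A]
  have "price (pS S) S = price min_walrasian_price S" using eq SO by (intro price_cong) auto
  moreover have "price min_walrasian_price (\<Omega> - S) = price r (\<Omega> - S)"
    using eq virtual_auction_price_outside[OF SO] by (intro price_cong) auto
  moreover have "price q \<Omega> = price q S + price q (\<Omega> - S)" for q
    using finite_items SO by (rule price_Diff)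
  ultimately show ?thesis
    using OR_demand_virtual_auction_demand[OF S] OR_demand_virtual_auction_sold_price[OF S]
    unfolding mediator_revenue_def walrasian_revenue_def by simp
qed

definition bidders_content :: "'a set \<Rightarrow> bool" where
  "bidders_content T \<longleftrightarrow> (\<forall>b\<in>B. AS T b \<in> demand \<Omega> (v b) (pS T))"

lemma virtual_auction_price_walrasian:
  assumes T: "T \<subseteq> \<Omega>" and content: "bidders_content T"
  obtains X where "walrasian r (pS T) X" and "is_alloc B T X"
proof -
  let ?p = "pS T"
  obtain q X where "walrasian (prohibit_outside T r) q X"
    using walrasian_exists[of "prohibit_outside T r", OF prohibit_outside_reserve_nonneg] by blast
  then have W: "walrasian (prohibit_outside T r) (prohibit_outside T ?p) X"
    by (rule virtual_auction_price_least_walrasian(1)[OF T])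
  have X_demand: "X b \<in> demand \<Omega> (v b) (prohibit_outside T ?p)" if "b \<in> B" for b
    using W that unfolding walrasian_def by blast
  have XT: "X b \<subseteq> T" if "b \<in> B" for b
    by (rule demand_subset_if_prohibitive[OF that _ X_demand[OF that]]) (simp add: prohibit_outside_def)
  have X_alloc: "is_alloc B \<Omega> X" using W by (simp add: walrasian_def)
  have "walrasian r ?p X"
    unfolding walrasian_def
  proof (intro conjI ballI)
    show "is_alloc B \<Omega> X" by (rule X_alloc)
    show "r j \<le> ?p j" if "j \<in> \<Omega>" for j using T that by (rule virtual_auction_price_ge_reserve)
    show "?p j = r j" if "j \<in> \<Omega> - (\<Union>b\<in>B. X b)" for j
    proof (cases "j \<in> T")
      case True
      have "prohibit_outside T ?p j = prohibit_outside T r j" using W that unfolding walrasian_def by blast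
      then show ?thesis using True by (simp add: prohibit_outside_def)
    qed (use virtual_auction_price_outside[OF T] that in auto)
    fix b assume b: "b \<in> B"
    have "AS T b \<subseteq> T" using virtual_auction_is_alloc[OF T] b by (simp add: is_alloc_def)
    then have "v b (AS T b) - price ?p (AS T b) \<le> v b (X b) - price ?p (X b)"
      using demand_prohibit_outside_iff[OF T b XT[OF b]] X_demand[OF b] by blast
    moreover have "v b (AS T b) - price ?p (AS T b) = indirect_utility \<Omega> (v b) ?p"
      using content b unfolding bidders_content_def by (simp add: demand_iff_indirect_utility[OF finite_items])
    moreover have "v b (X b) - price ?p (X b) \<le> indirect_utility \<Omega> (v b) ?p"
      using XT[OF b] T finite_items by (intro max_utility_ge) auto
    ultimately show "X b \<in> demand \<Omega> (v b) ?p"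
      using XT[OF b] T by (simp add: demand_iff_indirect_utility[OF finite_items])
  qed
  moreover have "is_alloc B T X" using X_alloc XT unfolding is_alloc_def by blast
  ultimately show ?thesis by (rule that)
qed

lemma virtual_auction_price_eq_min_walrasian:
  assumes T: "T \<subseteq> \<Omega>" and content: "bidders_content T" and j: "j \<in> \<Omega>"
  shows "pS T j = min_walrasian_price j"
proof -
  obtain X where W: "walrasian r (pS T) X" and X: "is_alloc B T X"
    using virtual_auction_price_walrasian[OF T content] by blast
  note least = min_walrasian_price_least[OF W]
  have "ef_price \<Omega> v B T r min_walrasian_price"
    unfolding ef_price_def
  proof (intro conjI exI ballI)
    show "r j \<le> min_walrasian_price j" if "j \<in> \<Omega>" for j using that by (rule reserve_le_min_walrasian_price)
    show "envy_free v B T min_walrasian_price X"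
      using X T by (rule envy_free_if_demand) (use least(1) in \<open>simp add: walrasian_def\<close>)
  qed
  from virtual_auction_price_minimal[OF T this least(2) j] show ?thesis by simp
qed

lemma walrasian_revenue_minus_mediator_revenue:
  assumes T: "T \<subseteq> \<Omega>" and content: "bidders_content T"
  defines "U \<equiv> \<Union>b\<in>B. AS T b"
  shows "walrasian_revenue - mediator_revenue \<Omega> v B r (pS T) (AS T) T
    = (\<Sum>j\<in>\<Omega> - U. min_walrasian_price j - r j) + price r (T - U)"
proof -
  have alloc: "is_alloc B T (AS T)" using T by (rule virtual_auction_is_alloc)
  have UT: "U \<subseteq> T" unfolding U_def by (rule is_alloc_Union_subset[OF alloc])
  have finT: "finite T" using T finite_items by (rule finite_subset)
  have "mediator_revenue \<Omega> v B r (pS T) (AS T) T = price (pS T) U - price r T"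
    using content price_alloc_Union[OF finite_bidders finT alloc]
    unfolding mediator_revenue_def bidders_content_def U_def by simp
  also have "price (pS T) U = price min_walrasian_price U"
    using virtual_auction_price_eq_min_walrasian[OF T content] UT T by (intro price_cong) auto
  finally show ?thesis
    using price_Diff[OF finite_items, of U] price_Diff[OF finT UT, of r] UT T
    unfolding walrasian_revenue_def price_def by (simp add: sum_subtractf)
qed

lemma mediator_revenue_le_walrasian_revenue:
  assumes T: "T \<subseteq> \<Omega>"
  shows "mediator_revenue \<Omega> v B r (pS T) (AS T) T \<le> walrasian_revenue"
proof (cases "bidders_content T")
  case True
  let ?U = "\<Union>b\<in>B. AS T b"
  have "0 \<le> (\<Sum>j\<in>\<Omega> - ?U. min_walrasian_price j - r j)"
    using reserve_le_min_walrasian_price by (intro sum_nonneg) auto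
  moreover have "0 \<le> price r (T - ?U)" using reserve_nonneg T by (intro price_nonneg) auto
  ultimately show ?thesis using walrasian_revenue_minus_mediator_revenue[OF T True] by linarith
next
  case False
  then show ?thesis using walrasian_revenue_nonneg unfolding mediator_revenue_def bidders_content_def by auto
qed

lemma mediator_revenue_eq_walrasian_revenue:
  assumes T: "T \<subseteq> \<Omega>" and eq: "mediator_revenue \<Omega> v B r (pS T) (AS T) T = walrasian_revenue"
  shows "T \<in> OR_demand \<Omega> v B r" and "OR_optimal v B T (AS T)"
proof -
  let ?U = "\<Union>b\<in>B. AS T b"
  have content: "bidders_content T"
  proof (rule ccontr)
    assume "\<not> bidders_content T"
    then have "mediator_revenue \<Omega> v B r (pS T) (AS T) T = -1"
      unfolding mediator_revenue_def bidders_content_def by auto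
    then show False using eq walrasian_revenue_nonneg by simp
  qed
  have "0 \<le> (\<Sum>j\<in>\<Omega> - ?U. min_walrasian_price j - r j)"
    using reserve_le_min_walrasian_price by (intro sum_nonneg) auto
  moreover have "0 \<le> price r (T - ?U)" using reserve_nonneg T by (intro price_nonneg) auto
  ultimately have unsold_zero: "(\<Sum>j\<in>\<Omega> - ?U. min_walrasian_price j - r j) = 0"
    and unallocated: "price r (T - ?U) = 0"
    using walrasian_revenue_minus_mediator_revenue[OF T content] eq by linarith+
  have "walrasian r min_walrasian_price (AS T)"
    unfolding walrasian_def
  proof (intro conjI ballI)
    show "is_alloc B \<Omega> (AS T)" using virtual_auction_is_alloc[OF T] T by (rule is_alloc_mono)
    fix b assume "b \<in> B"
    moreover have "demand \<Omega> (v b) (pS T) = demand \<Omega> (v b) min_walrasian_price"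
      by (rule demand_cong) (rule virtual_auction_price_eq_min_walrasian[OF T content])
    ultimately show "AS T b \<in> demand \<Omega> (v b) min_walrasian_price"
      using content unfolding bidders_content_def by blast
  next
    show "r j \<le> min_walrasian_price j" if "j \<in> \<Omega>" for j using that by (rule reserve_le_min_walrasian_price)
  next
    have "(\<Sum>j\<in>\<Omega> - ?U. min_walrasian_price j - r j) = 0 \<longleftrightarrow> (\<forall>j\<in>\<Omega> - ?U. min_walrasian_price j - r j = 0)"
      using finite_items reserve_le_min_walrasian_price by (intro sum_nonneg_eq_0_iff) auto
    then show "min_walrasian_price j = r j" if "j \<in> \<Omega> - ?U" for j using that unsold_zero by simp
  qed
  from walrasian_OR_demand_allocated_set[OF this virtual_auction_is_alloc[OF T] T unallocated]
  show "T \<in> OR_demand \<Omega> v B r" and "OR_optimal v B T (AS T)" by blast+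
qed

lemma mediator_demand_eq_OR_demand: "mediator_demand \<Omega> v B r pS AS = OR_demand \<Omega> v B r"
proof -
  obtain S0 where S0: "S0 \<in> OR_demand \<Omega> v B r"
    using demand_nonempty[OF finite_items] unfolding OR_demand_def by blast
  have S0O: "S0 \<subseteq> \<Omega>" using S0 by (simp add: OR_demand_iff)
  show ?thesis
  proof (intro set_eqI iffI)
    fix S assume S: "S \<in> mediator_demand \<Omega> v B r pS AS"
    then have SO: "S \<subseteq> \<Omega>" by (simp add: mediator_demand_def)
    have "mediator_revenue \<Omega> v B r (pS S0) (AS S0) S0 \<le> mediator_revenue \<Omega> v B r (pS S) (AS S) S"
      using S S0O by (simp add: mediator_demand_def)
    then have "mediator_revenue \<Omega> v B r (pS S) (AS S) S = walrasian_revenue"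
      using OR_demand_mediator_revenue[OF S0] mediator_revenue_le_walrasian_revenue[OF SO] by linarith
    then show "S \<in> OR_demand \<Omega> v B r" by (rule mediator_revenue_eq_walrasian_revenue(1)[OF SO])
  next
    fix S assume S: "S \<in> OR_demand \<Omega> v B r"
    then show "S \<in> mediator_demand \<Omega> v B r pS AS"
      using mediator_revenue_le_walrasian_revenue OR_demand_mediator_revenue[OF S]
      by (simp add: mediator_demand_def OR_demand_iff)
  qed
qed

lemma OR_demand_virtual_auction_OR_optimal:
  assumes "S \<in> OR_demand \<Omega> v B r"
  shows "OR_optimal v B S (AS S)"
  using assms OR_demand_mediator_revenue[OF assms]
  by (intro mediator_revenue_eq_walrasian_revenue(2)) (simp_all add: OR_demand_iff)

lemma OR_optimal_virtual_auction_alloc: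
  assumes S: "S \<in> OR_demand \<Omega> v B r" and A: "OR_optimal v B S A"
  shows "va_alloc v B S (pS S) A"
    and "mediator_revenue \<Omega> v B r (pS S) A S = mediator_revenue \<Omega> v B r (pS S) (AS S) S"
proof -
  have SO: "S \<subseteq> \<Omega>" using S by (simp add: OR_demand_iff)
  have demand: "\<forall>b\<in>B. A b \<in> demand \<Omega> (v b) (pS S)"
    using OR_demand_virtual_auction_price(1)[OF S A] by (simp add: walrasian_def)
  have "envy_free v B S (pS S) A"
    by (rule envy_free_if_demand[OF OR_optimal_is_alloc[OF S A] SO]) (use demand in blast)
  moreover have "(\<Sum>b\<in>B. price (pS S) (A' b)) \<le> (\<Sum>b\<in>B. price (pS S) (A b))"
    if "envy_free v B S (pS S) A'" for A'
    using envy_free_sold_price_le[OF SO that] OR_optimal_sold_price[OF S A] by simp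
  ultimately show "va_alloc v B S (pS S) A" unfolding va_alloc_def by blast
  show "mediator_revenue \<Omega> v B r (pS S) A S = mediator_revenue \<Omega> v B r (pS S) (AS S) S"
    using demand OR_demand_virtual_auction_demand[OF S] OR_optimal_sold_price[OF S A]
      OR_demand_virtual_auction_sold_price[OF S]
    unfolding mediator_revenue_def by simp
qed

end

theorem theorem3:
  fixes \<Omega> :: "'a set" and B :: "'b set" and v :: "'b \<Rightarrow> 'a set \<Rightarrow> real"
    and r :: "'a \<Rightarrow> real"
    and pS :: "'a set \<Rightarrow> 'a \<Rightarrow> real" and AS :: "'a set \<Rightarrow> 'b \<Rightarrow> 'a set"
  assumes "finite \<Omega>" and "finite B"
    and "\<forall>b\<in>B. monotone_valuation \<Omega> (v b)"
    and "\<forall>b\<in>B. gross_substitute \<Omega> (v b)"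
    and "\<forall>j\<in>\<Omega>. 0 \<le> r j"
    and "virtual_auction \<Omega> v B r pS AS"
  shows "mediator_demand \<Omega> v B r pS AS = OR_demand \<Omega> v B r \<and>
    (\<forall>S\<in>mediator_demand \<Omega> v B r pS AS.
       OR_optimal v B S (AS S) \<and>
       (\<forall>A. OR_optimal v B S A \<longrightarrow>
          va_alloc v B S (pS S) A \<and>
          mediator_revenue \<Omega> v B r (pS S) A S = mediator_revenue \<Omega> v B r (pS S) (AS S) S))"
proof -
  interpret gs_mediator \<Omega> B v r pS AS
    using assms by unfold_locales auto
  show ?thesis
    unfolding mediator_demand_eq_OR_demand
    using OR_demand_virtual_auction_OR_optimal OR_optimal_virtual_auction_alloc by blast
qed

end
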